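(* Every filtered dg-algebra has a filtered minimal $A_\infty$-model.
   Context: Work over a field. A filtered dg-algebra $(A,d,\mu,F)$ is a dg-algebra with a decreasing, bounded below, exhaustive filtration $F$ with $d(F^pA^n)\subseteq F^pA^{n+1}$ and $\mu(F^pA\otimes F^qA)\subseteq F^{p+q}A$. A filtered $A_\infty$-algebra is an $A_\infty$-algebra $(M,d,\nu_s)$ with such a filtration satisfying $d(F^pM^n)\subseteq F^pM^{n+1}$ and $\nu_s(F^{p_1}M^{n_1}\otimes\cdots\otimes F^{p_s}M^{n_s})\subseteq F^{p_1+\cdots+p_s}M^{n_1+\cdots+n_s-s+2}$; it is filtered minimal if $M$ has a bigrading with $F^pM^n=\bigoplus_{q\geq p}M^{q,n-q}$ and $d(F^pM^n)\subseteq F^{p+1}M^{n+1}$. A filtered $A_\infty$-morphism $f=(f_s)$ is an $A_\infty$-morphism with $f_s(F^{p_1}\otimes\cdots\otimes F^{p_s})\subseteq F^{p_1+\cdots+p_s}$, and it is a filtered quasi-isomorphism if $F^pf_1$ is a quasi-isomorphism for every $p$. A filtered minimal $A_\infty$-model of a filtered dg-algebra $A$ (viewed as an $A_\infty$-algebra with $\nu_2=\mu$, $\nu_s=0$ for $s\ge3$) is a filtered minimal $A_\infty$-algebra $M$ together with a filtered $A_\infty$-morphism $M\to A$ which is a filtered quasi-isomorphism. *)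

theory Defs
  imports Complex_Main
begin

text \<open>
A graded vector space
is represented by a family V :: int => 'a set of subspaces of an ambient vector space
(type 'a, scalar multiplication sc).  All operations are indexed by the degrees of their
(homogeneous) arguments, so different graded pieces may overlap as sets.
A filtration is F :: int => int => 'a set, where F p n is F^p V^n.
Multilinear operations of arity s take a list of s degrees and a list of s homogeneous
elements.  Sign conventions for A-infinity structures are those of Keller
(Introduction to A-infinity algebras and modules), with Koszul signs.
\<close>

definition psign :: "int \<Rightarrow> 'k::field" where
  "psign e = (if even e then 1 else -1)"

definition graded_space :: "('k::field \<Rightarrow> 'a::ab_group_add \<Rightarrow> 'a) \<Rightarrow> (int \<Rightarrow> 'a set) \<Rightarrow> bool" where
  "graded_space sc V \<longleftrightarrow> vector_space sc \<and> (\<forall>n. module.subspace sc (V n))"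

definition linear_on ::
  "('k::field \<Rightarrow> 'a::ab_group_add \<Rightarrow> 'a) \<Rightarrow> ('k \<Rightarrow> 'b::ab_group_add \<Rightarrow> 'b) \<Rightarrow> 'a set \<Rightarrow> ('a \<Rightarrow> 'b) \<Rightarrow> bool" where
  "linear_on sc1 sc2 S g \<longleftrightarrow>
     (\<forall>x\<in>S. \<forall>y\<in>S. g (x + y) = g x + g y) \<and> (\<forall>c. \<forall>x\<in>S. g (sc1 c x) = sc2 c (g x))"

definition homog :: "(int \<Rightarrow> 'a set) \<Rightarrow> int list \<Rightarrow> 'a list \<Rightarrow> bool" where
  "homog V ds xs \<longleftrightarrow> length xs = length ds \<and> (\<forall>i<length xs. xs ! i \<in> V (ds ! i))"

definition multilinear_op ::
  "('k::field \<Rightarrow> 'a::ab_group_add \<Rightarrow> 'a) \<Rightarrow> (int \<Rightarrow> 'a set) \<Rightarrow> ('k \<Rightarrow> 'b::ab_group_add \<Rightarrow> 'b) \<Rightarrow> (int \<Rightarrow> 'b set)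
    \<Rightarrow> nat \<Rightarrow> int \<Rightarrow> (int list \<Rightarrow> 'a list \<Rightarrow> 'b) \<Rightarrow> bool" where
  "multilinear_op sc1 V sc2 W s e g \<longleftrightarrow>
     (\<forall>ds xs. length ds = s \<longrightarrow> homog V ds xs \<longrightarrow> g ds xs \<in> W (sum_list ds + e)) \<and>
     (\<forall>ds xs i. length ds = s \<longrightarrow> homog V ds xs \<longrightarrow> i < s \<longrightarrow>
          linear_on sc1 sc2 (V (ds ! i)) (\<lambda>y. g ds (xs[i := y])))"

definition filtered_op ::
  "(int \<Rightarrow> 'a set) \<Rightarrow> (int \<Rightarrow> int \<Rightarrow> 'a set) \<Rightarrow> (int \<Rightarrow> int \<Rightarrow> 'b set)
    \<Rightarrow> nat \<Rightarrow> int \<Rightarrow> (int list \<Rightarrow> 'a list \<Rightarrow> 'b) \<Rightarrow> bool" where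
  "filtered_op V F G s e g \<longleftrightarrow>
     (\<forall>ps ds xs. length ps = s \<longrightarrow> length ds = s \<longrightarrow> homog V ds xs \<longrightarrow>
        (\<forall>i<s. xs ! i \<in> F (ps ! i) (ds ! i)) \<longrightarrow> g ds xs \<in> G (sum_list ps) (sum_list ds + e))"

text \<open>Decreasing, bounded below (for each n, F^p V^n = 0 for p large; cf. Weibel 5.5.1)
  and exhaustive filtration by subspaces.\<close>
definition filtration :: "('k::field \<Rightarrow> 'a::ab_group_add \<Rightarrow> 'a) \<Rightarrow> (int \<Rightarrow> 'a set) \<Rightarrow> (int \<Rightarrow> int \<Rightarrow> 'a set) \<Rightarrow> bool" where
  "filtration sc V F \<longleftrightarrow>
     (\<forall>p n. module.subspace sc (F p n) \<and> F p n \<subseteq> V n \<and> F (p + 1) n \<subseteq> F p n) \<and>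
     (\<forall>n. (\<Union>p. F p n) = V n) \<and>
     (\<forall>n. \<exists>p. F p n = {0})"

definition dg_algebra ::
  "('k::field \<Rightarrow> 'a::ab_group_add \<Rightarrow> 'a) \<Rightarrow> (int \<Rightarrow> 'a set) \<Rightarrow> (int \<Rightarrow> 'a \<Rightarrow> 'a)
    \<Rightarrow> (int \<Rightarrow> int \<Rightarrow> 'a \<Rightarrow> 'a \<Rightarrow> 'a) \<Rightarrow> bool" where
  "dg_algebra sc A d mu \<longleftrightarrow>
     graded_space sc A \<and>
     (\<forall>n. linear_on sc sc (A n) (d n) \<and> (\<forall>x\<in>A n. d n x \<in> A (n + 1))) \<and>
     (\<forall>n m. \<forall>x\<in>A n. \<forall>y\<in>A m. mu n m x y \<in> A (n + m)) \<and>
     (\<forall>n m. \<forall>y\<in>A m. linear_on sc sc (A n) (\<lambda>x. mu n m x y)) \<and>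
     (\<forall>n m. \<forall>x\<in>A n. linear_on sc sc (A m) (\<lambda>y. mu n m x y)) \<and>
     (\<forall>n. \<forall>x\<in>A n. d (n + 1) (d n x) = 0) \<and>
     (\<forall>n m. \<forall>x\<in>A n. \<forall>y\<in>A m.
        d (n + m) (mu n m x y) = mu (n + 1) m (d n x) y + sc (psign n) (mu n (m + 1) x (d m y))) \<and>
     (\<forall>n m k. \<forall>x\<in>A n. \<forall>y\<in>A m. \<forall>z\<in>A k.
        mu (n + m) k (mu n m x y) z = mu n (m + k) x (mu m k y z))"

definition filtered_dg_algebra ::
  "('k::field \<Rightarrow> 'a::ab_group_add \<Rightarrow> 'a) \<Rightarrow> (int \<Rightarrow> 'a set) \<Rightarrow> (int \<Rightarrow> int \<Rightarrow> 'a set) \<Rightarrow> (int \<Rightarrow> 'a \<Rightarrow> 'a)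
    \<Rightarrow> (int \<Rightarrow> int \<Rightarrow> 'a \<Rightarrow> 'a \<Rightarrow> 'a) \<Rightarrow> bool" where
  "filtered_dg_algebra sc A F d mu \<longleftrightarrow>
     dg_algebra sc A d mu \<and> filtration sc A F \<and>
     (\<forall>p n. \<forall>x\<in>F p n. d n x \<in> F p (n + 1)) \<and>
     (\<forall>p q n m. \<forall>x\<in>F p n. \<forall>y\<in>F q m. mu n m x y \<in> F (p + q) (n + m))"

definition ainf_ops :: "(int \<Rightarrow> 'a \<Rightarrow> 'a) \<Rightarrow> (nat \<Rightarrow> int list \<Rightarrow> 'a list \<Rightarrow> 'a) \<Rightarrow> nat \<Rightarrow> int list \<Rightarrow> 'a list \<Rightarrow> 'a" where
  "ainf_ops d nu s ds xs = (if s = 1 then d (hd ds) (hd xs) else nu s ds xs)"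

definition dg_nu :: "(int \<Rightarrow> int \<Rightarrow> 'a \<Rightarrow> 'a \<Rightarrow> 'a::zero) \<Rightarrow> nat \<Rightarrow> int list \<Rightarrow> 'a list \<Rightarrow> 'a" where
  "dg_nu mu s ds xs = (if s = 2 then mu (ds ! 0) (ds ! 1) (xs ! 0) (xs ! 1) else 0)"

text \<open>The sum  sum_{r+s+t=n, s>=1} (-1)^(r+st) outer_{r+1+t} (1^r (x) inner_s (x) 1^t)
  evaluated on homogeneous xs of degrees ds, with Koszul sign (-1)^((2-s)(|x_1|+..+|x_r|)).\<close>
definition insert_sum ::
  "('k::field \<Rightarrow> 'b::ab_group_add \<Rightarrow> 'b) \<Rightarrow> (nat \<Rightarrow> int list \<Rightarrow> 'a list \<Rightarrow> 'b)
    \<Rightarrow> (nat \<Rightarrow> int list \<Rightarrow> 'a list \<Rightarrow> 'a) \<Rightarrow> nat \<Rightarrow> int list \<Rightarrow> 'a list \<Rightarrow> 'b" where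
  "insert_sum sc outer inner n ds xs =
     (\<Sum>(r, s) \<in> {(r, s). 1 \<le> s \<and> r + s \<le> n}.
        let t = n - r - s in
        sc (psign (int r + int s * int t + (2 - int s) * sum_list (take r ds)))
           (outer (r + 1 + t)
              (take r ds @ [sum_list (take s (drop r ds)) + 2 - int s] @ drop (r + s) ds)
              (take r xs @ [inner s (take s (drop r ds)) (take s (drop r xs))] @ drop (r + s) xs)))"

definition ainf_algebra ::
  "('k::field \<Rightarrow> 'a::ab_group_add \<Rightarrow> 'a) \<Rightarrow> (int \<Rightarrow> 'a set) \<Rightarrow> (int \<Rightarrow> 'a \<Rightarrow> 'a)
    \<Rightarrow> (nat \<Rightarrow> int list \<Rightarrow> 'a list \<Rightarrow> 'a) \<Rightarrow> bool" where
  "ainf_algebra sc V d nu \<longleftrightarrow>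
     graded_space sc V \<and>
     (\<forall>n. linear_on sc sc (V n) (d n) \<and> (\<forall>x\<in>V n. d n x \<in> V (n + 1))) \<and>
     (\<forall>s\<ge>2. multilinear_op sc V sc V s (2 - int s) (nu s)) \<and>
     (\<forall>n\<ge>1. \<forall>ds xs. length ds = n \<longrightarrow> homog V ds xs \<longrightarrow>
        insert_sum sc (ainf_ops d nu) (ainf_ops d nu) n ds xs = 0)"

definition filtered_ainf_algebra ::
  "('k::field \<Rightarrow> 'a::ab_group_add \<Rightarrow> 'a) \<Rightarrow> (int \<Rightarrow> 'a set) \<Rightarrow> (int \<Rightarrow> int \<Rightarrow> 'a set) \<Rightarrow> (int \<Rightarrow> 'a \<Rightarrow> 'a)
    \<Rightarrow> (nat \<Rightarrow> int list \<Rightarrow> 'a list \<Rightarrow> 'a) \<Rightarrow> bool" where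
  "filtered_ainf_algebra sc V F d nu \<longleftrightarrow>
     ainf_algebra sc V d nu \<and> filtration sc V F \<and>
     (\<forall>p n. \<forall>x\<in>F p n. d n x \<in> F p (n + 1)) \<and>
     (\<forall>s\<ge>2. filtered_op V F F s (2 - int s) (nu s))"

definition independent_family :: "('b \<Rightarrow> 'a::ab_group_add set) \<Rightarrow> bool" where
  "independent_family W \<longleftrightarrow>
     (\<forall>Q x. finite Q \<longrightarrow> (\<forall>q\<in>Q. x q \<in> W q) \<longrightarrow> (\<Sum>q\<in>Q. x q) = 0 \<longrightarrow> (\<forall>q\<in>Q. x q = 0))"

text \<open>Filtered minimal: a bigrading B p q = M^(p,q) inside M^(p+q) with
  F^p M^n = (+)_(q>=p) M^(q,n-q) (direct sum), and d(F^p M^n) in F^(p+1) M^(n+1).\<close>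
definition filtered_minimal ::
  "('k::field \<Rightarrow> 'a::ab_group_add \<Rightarrow> 'a) \<Rightarrow> (int \<Rightarrow> 'a set) \<Rightarrow> (int \<Rightarrow> int \<Rightarrow> 'a set) \<Rightarrow> (int \<Rightarrow> 'a \<Rightarrow> 'a)
    \<Rightarrow> (nat \<Rightarrow> int list \<Rightarrow> 'a list \<Rightarrow> 'a) \<Rightarrow> bool" where
  "filtered_minimal sc V F d nu \<longleftrightarrow>
     filtered_ainf_algebra sc V F d nu \<and>
     (\<exists>B :: int \<Rightarrow> int \<Rightarrow> 'a set.
        (\<forall>p q. module.subspace sc (B p q) \<and> B p q \<subseteq> V (p + q)) \<and>
        (\<forall>n. independent_family (\<lambda>q. B q (n - q))) \<and>
        (\<forall>p n. F p n = module.span sc (\<Union>q\<in>{p..}. B q (n - q)))) \<and>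
     (\<forall>p n. \<forall>x\<in>F p n. d n x \<in> F (p + 1) (n + 1))"

definition compositions :: "nat \<Rightarrow> nat list set" where
  "compositions n = {cs. sum_list cs = n \<and> 0 \<notin> set cs}"

fun blocks :: "nat list \<Rightarrow> 'b list \<Rightarrow> 'b list list" where
  "blocks [] xs = []"
| "blocks (i # is) xs = take i xs # blocks is (drop i xs)"

text \<open>Koszul sign exponent of (f_(i_1) (x) ... (x) f_(i_r)) applied to the blocks:
  sum_j (1 - i_j) * (total degree of the blocks before j).\<close>
fun koszul_exp :: "int \<Rightarrow> nat list \<Rightarrow> int list list \<Rightarrow> int" where
  "koszul_exp acc (i # is) (b # bs) = (1 - int i) * acc + koszul_exp (acc + sum_list b) is bs"
| "koszul_exp acc _ _ = 0"

definition keller_exp :: "nat list \<Rightarrow> int" where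
  "keller_exp cs = (\<Sum>j<length cs. (int (length cs) - 1 - int j) * (int (cs ! j) - 1))"

definition comp_sum ::
  "('k::field \<Rightarrow> 'b::ab_group_add \<Rightarrow> 'b) \<Rightarrow> (nat \<Rightarrow> int list \<Rightarrow> 'b list \<Rightarrow> 'b)
    \<Rightarrow> (nat \<Rightarrow> int list \<Rightarrow> 'a list \<Rightarrow> 'b) \<Rightarrow> nat \<Rightarrow> int list \<Rightarrow> 'a list \<Rightarrow> 'b" where
  "comp_sum sc m f n ds xs =
     (\<Sum>cs \<in> compositions n.
        let dbs = blocks cs ds; xbs = blocks cs xs in
        sc (psign (keller_exp cs + koszul_exp 0 cs dbs))
           (m (length cs)
              (map (\<lambda>(i, b). sum_list b + 1 - int i) (zip cs dbs))
              (map (\<lambda>(i, (db, xb)). f i db xb) (zip cs (zip dbs xbs)))))"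

definition filtered_ainf_morphism ::
  "('k::field \<Rightarrow> 'a::ab_group_add \<Rightarrow> 'a) \<Rightarrow> (int \<Rightarrow> 'a set) \<Rightarrow> (int \<Rightarrow> int \<Rightarrow> 'a set) \<Rightarrow> (int \<Rightarrow> 'a \<Rightarrow> 'a)
    \<Rightarrow> (nat \<Rightarrow> int list \<Rightarrow> 'a list \<Rightarrow> 'a)
    \<Rightarrow> (int \<Rightarrow> 'a set) \<Rightarrow> (int \<Rightarrow> int \<Rightarrow> 'a set) \<Rightarrow> (int \<Rightarrow> 'a \<Rightarrow> 'a)
    \<Rightarrow> (nat \<Rightarrow> int list \<Rightarrow> 'a list \<Rightarrow> 'a)
    \<Rightarrow> (nat \<Rightarrow> int list \<Rightarrow> 'a list \<Rightarrow> 'a) \<Rightarrow> bool" where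
  "filtered_ainf_morphism sc V FV dV nuV W FW dW nuW f \<longleftrightarrow>
     (\<forall>s\<ge>1. multilinear_op sc V sc W s (1 - int s) (f s)) \<and>
     (\<forall>s\<ge>1. filtered_op V FV FW s (1 - int s) (f s)) \<and>
     (\<forall>n\<ge>1. \<forall>ds xs. length ds = n \<longrightarrow> homog V ds xs \<longrightarrow>
        insert_sum sc f (ainf_ops dV nuV) n ds xs = comp_sum sc (ainf_ops dW nuW) f n ds xs)"

text \<open>F^p f_1 : F^p V -> F^p W induces a bijection in cohomology, for every p.\<close>
definition filtered_quasi_iso ::
  "(int \<Rightarrow> int \<Rightarrow> 'a::ab_group_add set) \<Rightarrow> (int \<Rightarrow> 'a \<Rightarrow> 'a) \<Rightarrow> (int \<Rightarrow> int \<Rightarrow> 'b::ab_group_add set) \<Rightarrow> (int \<Rightarrow> 'b \<Rightarrow> 'b)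
    \<Rightarrow> (int \<Rightarrow> 'a \<Rightarrow> 'b) \<Rightarrow> bool" where
  "filtered_quasi_iso FV dV FW dW g \<longleftrightarrow>
     (\<forall>p n. \<forall>y\<in>FW p n. dW n y = 0 \<longrightarrow>
        (\<exists>x\<in>FV p n. dV n x = 0 \<and> y - g n x \<in> dW (n - 1) ` FW p (n - 1))) \<and>
     (\<forall>p n. \<forall>x\<in>FV p n. dV n x = 0 \<longrightarrow> g n x \<in> dW (n - 1) ` FW p (n - 1) \<longrightarrow>
        x \<in> dV (n - 1) ` FV p (n - 1))"

definition filtered_minimal_model ::
  "('k::field \<Rightarrow> 'a::ab_group_add \<Rightarrow> 'a) \<Rightarrow> (int \<Rightarrow> 'a set) \<Rightarrow> (int \<Rightarrow> int \<Rightarrow> 'a set) \<Rightarrow> (int \<Rightarrow> 'a \<Rightarrow> 'a)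
    \<Rightarrow> (int \<Rightarrow> int \<Rightarrow> 'a \<Rightarrow> 'a \<Rightarrow> 'a)
    \<Rightarrow> (int \<Rightarrow> 'a set) \<Rightarrow> (int \<Rightarrow> int \<Rightarrow> 'a set) \<Rightarrow> (int \<Rightarrow> 'a \<Rightarrow> 'a)
    \<Rightarrow> (nat \<Rightarrow> int list \<Rightarrow> 'a list \<Rightarrow> 'a) \<Rightarrow> (nat \<Rightarrow> int list \<Rightarrow> 'a list \<Rightarrow> 'a) \<Rightarrow> bool" where
  "filtered_minimal_model sc A FA dA muA M FM dM nuM f \<longleftrightarrow>
     filtered_minimal sc M FM dM nuM \<and>
     filtered_ainf_morphism sc M FM dM nuM A FA dA (dg_nu muA) f \<and>
     filtered_quasi_iso FM dM FA dA (\<lambda>n x. f 1 [n] [x])"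

end

theory Submission
  imports Defs
begin

text \<open>
  The minimal model is obtained by homotopy transfer along a filtered Hodge decomposition of A.
  In each degree and at each filtration level q choose a complement C^q of the elements of F^q whose
  differential lies in F^(q+1), put B^q = d C^q, and choose a complement H^q of F^(q+1) + C^q + B^q
  in F^q. Taking spans over all levels gives A = B + (H + C) as a direct sum compatible with the
  filtration, and d restricts to an isomorphism C -> B whose inverse again preserves the
  filtration, since C^q meets the near-cycles of level q only in 0. With h = - d^-1 o pr_B, the map
  P = 1 + dh + hd is a filtered projection commuting with d, and its image M is a filtered
  subcomplex on which d raises the filtration: for x in F^q M write x = u + c with u a near-cycle
  and c in C^q; then d x = P (d x) = P (d u) lies in F^(q+1) because P kills d C.
  Merkulov's formulas f_n = h lam_n, m_n = P lam_n, where lam_n is the signed sum of the products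
  mu (f_k, f_(n-k)), then define an A-infinity structure on M and an A-infinity morphism M -> A
  extending the inclusion. All maps involved preserve the filtration, so the result is filtered,
  and the inclusion of the filtered deformation retract M is a filtered quasi-isomorphism.
\<close>

section \<open>Linear algebra of decreasing filtrations\<close>

definition compl_subspace :: "('k::field \<Rightarrow> 'a::ab_group_add \<Rightarrow> 'a) \<Rightarrow> 'a set \<Rightarrow> 'a set \<Rightarrow> 'a set" where
  "compl_subspace sc U V =
     (SOME W. module.subspace sc W \<and> W \<subseteq> V \<and> U \<inter> W = {0} \<and> (\<forall>v\<in>V. \<exists>u\<in>U. \<exists>w\<in>W. v = u + w))"

context vector_space
begin

lemma linear_on_add: "linear_on scale scale V g \<Longrightarrow> x \<in> V \<Longrightarrow> y \<in> V \<Longrightarrow> g (x + y) = g x + g y"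
  unfolding linear_on_def by blast

lemma linear_on_scale: "linear_on scale scale V g \<Longrightarrow> x \<in> V \<Longrightarrow> g (c *s x) = c *s g x"
  unfolding linear_on_def by blast

lemma linear_on_0: "linear_on scale scale V g \<Longrightarrow> subspace V \<Longrightarrow> g 0 = 0"
  using linear_on_scale[of V g 0 0] subspace_0 by simp

lemma linear_on_neg: "linear_on scale scale V g \<Longrightarrow> x \<in> V \<Longrightarrow> g (- x) = - g x"
  using linear_on_scale[of V g x "-1"] by (simp add: scale_minus_left)

lemma linear_on_diff:
  assumes "linear_on scale scale V g" "subspace V" "x \<in> V" "y \<in> V"
  shows "g (x - y) = g x - g y"
  using linear_on_add[OF assms(1,3) subspace_neg[OF assms(2,4)]] linear_on_neg[OF assms(1,4)]
  by simp

lemma linear_on_sum: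
  assumes "linear_on scale scale V g" "subspace V" "\<And>i. i \<in> I \<Longrightarrow> f i \<in> V"
  shows "g (\<Sum>i\<in>I. f i) = (\<Sum>i\<in>I. g (f i))"
  using assms(3)
proof (induction I rule: infinite_finite_induct)
  case (insert x F)
  then have "(\<Sum>i\<in>F. f i) \<in> V" using subspace_sum[OF assms(2)] by blast
  then show ?case using insert linear_on_add[OF assms(1)] by simp
qed (use linear_on_0[OF assms(1,2)] in simp_all)

lemma linear_on_sum_scale:
  assumes "linear_on scale scale V g" "subspace V" "\<And>i. i \<in> I \<Longrightarrow> f i \<in> V"
  shows "g (\<Sum>i\<in>I. c i *s f i) = (\<Sum>i\<in>I. c i *s g (f i))"
proof -
  have "g (\<Sum>i\<in>I. c i *s f i) = (\<Sum>i\<in>I. g (c i *s f i))"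
    by (rule linear_on_sum[OF assms(1,2)]) (use assms(2,3) subspace_scale in blast)
  also have "\<dots> = (\<Sum>i\<in>I. c i *s g (f i))"
    by (rule sum.cong) (use linear_on_scale[OF assms(1)] assms(3) in auto)
  finally show ?thesis .
qed

lemma linear_on_id: "linear_on scale scale V (\<lambda>y. y)"
  unfolding linear_on_def by simp

lemma linear_on_subset: "linear_on scale scale V f \<Longrightarrow> W \<subseteq> V \<Longrightarrow> linear_on scale scale W f"
  unfolding linear_on_def by blast

lemma linear_on_compose:
  assumes "linear_on scale scale V f" "\<And>y. y \<in> V \<Longrightarrow> f y \<in> W" "linear_on scale scale W g"
  shows "linear_on scale scale V (\<lambda>y. g (f y))"
  using assms unfolding linear_on_def by (metis subspace_def)

lemma linear_on_scale_fun:
  "linear_on scale scale V f \<Longrightarrow> linear_on scale scale V (\<lambda>y. c *s f y)"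
  unfolding linear_on_def by (simp add: scale_right_distrib scale_left_commute)

lemma linear_on_sum_fun:
  assumes "\<And>k. k \<in> K \<Longrightarrow> linear_on scale scale V (f k)"
  shows "linear_on scale scale V (\<lambda>y. \<Sum>k\<in>K. f k y)"
  using assms unfolding linear_on_def by (simp add: sum.distrib scale_sum_right)

lemma linear_on_image_subspace:
  assumes g: "linear_on scale scale V g" and V: "subspace V" and S: "subspace S" "S \<subseteq> V"
  shows "subspace (g ` S)"
  unfolding subspace_def
proof (intro conjI ballI allI)
  show "0 \<in> g ` S"
    using linear_on_0[OF g V] subspace_0[OF S(1)] by (metis image_eqI)
next
  fix x y assume "x \<in> g ` S" "y \<in> g ` S"
  then obtain a b where ab: "a \<in> S" "b \<in> S" "x = g a" "y = g b" by blast
  then have "a \<in> V" "b \<in> V" using S(2) by auto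
  then have "x + y = g (a + b)" using linear_on_add[OF g] ab by simp
  then show "x + y \<in> g ` S" using subspace_add[OF S(1) ab(1,2)] by blast
next
  fix c x assume "x \<in> g ` S"
  then obtain a where a: "a \<in> S" "x = g a" by blast
  then have "a \<in> V" using S(2) by auto
  then have "c *s x = g (c *s a)" using linear_on_scale[OF g] a by simp
  then show "c *s x \<in> g ` S" using subspace_scale[OF S(1) a(1)] by blast
qed

lemma linear_on_span_image:
  assumes g: "linear_on scale scale V g" and V: "subspace V" and S: "S \<subseteq> V"
  shows "g ` span S = span (g ` S)"
proof
  have "subspace {x \<in> V. g x \<in> span (g ` S)}"
    unfolding subspace_def
    using linear_on_add[OF g] linear_on_scale[OF g] linear_on_0[OF g V]
      subspace_0[OF V] subspace_add[OF V] subspace_scale[OF V]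
    by (auto intro: span_zero span_add span_scale)
  moreover have "S \<subseteq> {x \<in> V. g x \<in> span (g ` S)}" using S by (auto intro: span_base)
  ultimately show "g ` span S \<subseteq> span (g ` S)" using span_minimal by blast
  have "subspace (g ` span S)"
    by (rule linear_on_image_subspace[OF g V subspace_span span_minimal[OF S V]])
  moreover have "g ` S \<subseteq> g ` span S" using span_superset by blast
  ultimately show "span (g ` S) \<subseteq> g ` span S" using span_minimal by blast
qed

lemma span_independent_disjoint:
  assumes "independent B" "B1 \<subseteq> B" "B2 \<subseteq> B" "B1 \<inter> B2 = {}" "x \<in> span B1" "x \<in> span B2"
  shows "x = 0"
proof -
  have i1: "independent B1" using assms independent_mono by blast
  have e1: "representation B x = representation B1 x"
    by (rule representation_extend) (use assms in auto)
  have e2: "representation B x = representation B2 x"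
    by (rule representation_extend) (use assms in auto)
  have "\<forall>b. representation B1 x b = 0"
  proof
    fix b show "representation B1 x b = 0"
    proof (rule ccontr)
      assume h: "representation B1 x b \<noteq> 0"
      then have "b \<in> B1" using representation_ne_zero by blast
      moreover have "representation B2 x b \<noteq> 0" using h e1 e2 by simp
      then have "b \<in> B2" using representation_ne_zero by blast
      ultimately show False using assms(4) by blast
    qed
  qed
  then show "x = 0" using sum_nonzero_representation_eq[OF i1 assms(5)] by simp
qed

lemma subspace_complement_exists:
  assumes "subspace U" "subspace V" "U \<subseteq> V"
  shows "\<exists>W. subspace W \<and> W \<subseteq> V \<and> U \<inter> W = {0} \<and> (\<forall>v\<in>V. \<exists>u\<in>U. \<exists>w\<in>W. v = u + w)"
proof -
  obtain BU where BU: "BU \<subseteq> U" "independent BU" "U \<subseteq> span BU"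
    using maximal_independent_subset[of U] by blast
  obtain B where B: "BU \<subseteq> B" "B \<subseteq> V" "independent B" "V \<subseteq> span B"
    using maximal_independent_subset_extend[of BU V] BU assms(3) by blast
  define W where "W = span (B - BU)"
  have sU: "span BU = U" using BU assms(1) span_subspace by blast
  show ?thesis
  proof (intro exI conjI)
    show "subspace W" by (simp add: W_def)
    have "B - BU \<subseteq> V" using B(2) by blast
    then show "W \<subseteq> V" unfolding W_def by (rule span_minimal[OF _ assms(2)])
    show "U \<inter> W = {0}"
    proof
      have "BU \<inter> (B - BU) = {}" by blast
      then show "U \<inter> W \<subseteq> {0}"
        using span_independent_disjoint[OF B(3,1) Diff_subset] sU unfolding W_def by blast
      show "{0} \<subseteq> U \<inter> W" using subspace_0[OF assms(1)] span_zero unfolding W_def by simp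
    qed
    show "\<forall>v\<in>V. \<exists>u\<in>U. \<exists>w\<in>W. v = u + w"
    proof
      fix v assume "v \<in> V"
      moreover have "BU \<union> (B - BU) = B" using B(1) by blast
      ultimately have "v \<in> span (BU \<union> (B - BU))" using B(4) by auto
      then obtain u w where "u \<in> span BU" "w \<in> span (B - BU)" "v = u + w" unfolding span_Un by blast
      then show "\<exists>u\<in>U. \<exists>w\<in>W. v = u + w" using sU unfolding W_def by blast
    qed
  qed
qed

lemma compl_subspace:
  assumes "subspace U" "subspace V" "U \<subseteq> V"
  shows "subspace (compl_subspace scale U V)" "compl_subspace scale U V \<subseteq> V"
      "U \<inter> compl_subspace scale U V = {0}"
    "\<And>v. v \<in> V \<Longrightarrow> \<exists>u\<in>U. \<exists>w\<in>compl_subspace scale U V. v = u + w"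
proof -
  have "subspace (compl_subspace scale U V) \<and> compl_subspace scale U V \<subseteq> V
      \<and> U \<inter> compl_subspace scale U V = {0} \<and>
      (\<forall>v\<in>V. \<exists>u\<in>U. \<exists>w\<in>compl_subspace scale U V. v = u + w)"
    unfolding compl_subspace_def by (rule someI_ex) (rule subspace_complement_exists[OF assms])
  then show "subspace (compl_subspace scale U V)" "compl_subspace scale U V \<subseteq> V"
      "U \<inter> compl_subspace scale U V = {0}"
    "\<And>v. v \<in> V \<Longrightarrow> \<exists>u\<in>U. \<exists>w\<in>compl_subspace scale U V. v = u + w" by auto
qed

lemma decreasing_family_le:
  fixes G :: "int \<Rightarrow> 'b set"
  assumes dec: "\<And>q. G (q+1) \<subseteq> G q" and "(q::int) \<le> q'"
  shows "G q' \<subseteq> G q"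
  using assms(2)
proof (induction q' rule: int_ge_induct)
  case base then show ?case by simp
next
  case (step i) then show ?case using dec[of i] by blast
qed

lemma span_UN_subspace_sum:
  assumes sub: "\<And>q. subspace (X q)" and x: "x \<in> span (\<Union>q. X q)"
  obtains Q v where "finite Q" "\<And>q. v q \<in> X q" "\<And>q. q \<notin> Q \<Longrightarrow> v q = 0" "x = (\<Sum>q\<in>Q. v q)"
proof -
  have "\<exists>Q v. finite Q \<and> (\<forall>q. v q \<in> X q) \<and> (\<forall>q. q \<notin> Q \<longrightarrow> v q = 0) \<and> x = (\<Sum>q\<in>Q. v q)"
    using x
  proof (induction rule: span_induct_alt)
    case base
    show ?case by (rule exI[of _ "{}"], rule exI[of _ "\<lambda>_. 0"]) (simp add: subspace_0[OF sub])
  next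
    case (step c x y)
    then obtain Q v where Qv: "finite Q" "\<forall>q. v q \<in> X q" "\<forall>q. q \<notin> Q \<longrightarrow> v q = 0" "y = (\<Sum>q\<in>Q. v q)"
      by blast
    from step obtain q0 where q0: "x \<in> X q0" by blast
    define v' where "v' = v(q0 := c *s x + v q0)"
    have "(\<Sum>q\<in>insert q0 Q. v' q) = v' q0 + (\<Sum>q\<in>insert q0 Q - {q0}. v' q)"
      by (rule sum.remove) (use Qv(1) in auto)
    also have "(\<Sum>q\<in>insert q0 Q - {q0}. v' q) = (\<Sum>q\<in>insert q0 Q - {q0}. v q)"
      by (rule sum.cong) (auto simp: v'_def)
    also have "v' q0 + (\<Sum>q\<in>insert q0 Q - {q0}. v q)
      = c *s x + (v q0 + (\<Sum>q\<in>insert q0 Q - {q0}. v q))"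
      by (simp add: v'_def add.assoc)
    also have "v q0 + (\<Sum>q\<in>insert q0 Q - {q0}. v q) = (\<Sum>q\<in>insert q0 Q. v q)"
      by (rule sum.remove[symmetric]) (use Qv(1) in auto)
    also have "\<dots> = y"
      unfolding Qv(4) by (rule sum.mono_neutral_right) (use Qv in auto)
    finally have "c *s x + y = (\<Sum>q\<in>insert q0 Q. v' q)" ..
    moreover have "\<forall>q. v' q \<in> X q"
      using Qv(2) q0 sub unfolding v'_def by (auto intro!: subspace_add subspace_scale)
    moreover have "\<forall>q. q \<notin> insert q0 Q \<longrightarrow> v' q = 0" using Qv(3) unfolding v'_def by simp
    ultimately show ?case using Qv(1) by blast
  qed
  then show ?thesis using that by blast
qed

lemma level_sum_vanishes:
  fixes G Z :: "int \<Rightarrow> 'b set" and v :: "int \<Rightarrow> 'b"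
  assumes dec: "\<And>q. G (q+1) \<subseteq> G q" and subG: "\<And>q. subspace (G q)"
    and ZG: "\<And>q. Z q \<subseteq> G q" and strict: "\<And>q z. z \<in> Z q \<Longrightarrow> z \<in> G (q+1) \<Longrightarrow> z = 0"
    and fin: "finite Q" and v: "\<And>q. q \<in> Q \<Longrightarrow> v q \<in> Z q"
    and s: "(\<Sum>q\<in>Q. v q) \<in> G p"
  shows "\<forall>q\<in>Q. q < p \<longrightarrow> v q = 0"
proof (rule ccontr)
  let ?bad = "{q \<in> Q. q < p \<and> v q \<noteq> 0}"
  assume "\<not> ?thesis"
  then have ne: "?bad \<noteq> {}" by blast
  define q0 where "q0 = Min ?bad"
  have fin_bad: "finite ?bad" using fin by simp
  have q0: "q0 \<in> Q" "q0 < p" "v q0 \<noteq> 0" using Min_in[OF fin_bad ne] unfolding q0_def by auto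
  have G_le: "G q \<subseteq> G (q0 + 1)" if "q0 + 1 \<le> q" for q
    using decreasing_family_le[where G=G, OF dec that] .
  have "v q \<in> G (q0 + 1)" if q: "q \<in> Q - {q0}" for q
  proof (cases "q < p \<and> v q \<noteq> 0")
    case True
    then have "q0 \<le> q" using q Min_le[OF fin_bad] unfolding q0_def by blast
    then have "q0 + 1 \<le> q" using q by simp
    then show ?thesis using G_le ZG v q by blast
  next
    case False
    then consider "p \<le> q" | "v q = 0" by linarith
    then show ?thesis
    proof cases
      case 1
      then have "q0 + 1 \<le> q" using q0(2) by simp
      then show ?thesis using G_le ZG v q by blast
    qed (simp add: subspace_0[OF subG])
  qed
  then have rest: "(\<Sum>q\<in>Q - {q0}. v q) \<in> G (q0 + 1)" by (rule subspace_sum[OF subG])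
  have "(\<Sum>q\<in>Q. v q) \<in> G (q0 + 1)" using s G_le[of p] q0(2) by auto
  then have "v q0 \<in> G (q0 + 1)"
    using subspace_diff[OF subG _ rest] sum.remove[OF fin q0(1), of v]
      by (metis add_diff_cancel_right')
  then show False using strict v q0 by blast
qed

lemma independent_levels:
  fixes G Z :: "int \<Rightarrow> 'b set"
  assumes dec: "\<And>q. G (q+1) \<subseteq> G q" and subG: "\<And>q. subspace (G q)"
    and ZG: "\<And>q. Z q \<subseteq> G q" and strict: "\<And>q z. z \<in> Z q \<Longrightarrow> z \<in> G (q+1) \<Longrightarrow> z = 0"
  shows "independent_family Z"
  unfolding independent_family_def
proof (intro allI impI)
  fix Q :: "int set" and v :: "int \<Rightarrow> 'b"
  assume Q: "finite Q" and v: "\<forall>q\<in>Q. v q \<in> Z q" and s: "(\<Sum>q\<in>Q. v q) = 0"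
  define p where "p = Max (insert 0 Q) + 1"
  have "\<forall>q\<in>Q. q < p \<longrightarrow> v q = 0"
    by (rule level_sum_vanishes[where G=G and Z=Z, OF dec subG ZG strict Q]) (use v s subspace_0[OF subG] in auto)
  moreover have "\<forall>q\<in>Q. q < p" using Q unfolding p_def by (simp add: le_imp_less_or_eq less_add_one)
  ultimately show "\<forall>q\<in>Q. v q = 0" by blast
qed

lemma span_levels:
  fixes G Z :: "int \<Rightarrow> 'b set"
  assumes dec: "\<And>q. G (q+1) \<subseteq> G q" and subG: "\<And>q. subspace (G q)" and bnd: "G P = {0}"
    and ZG: "\<And>q. Z q \<subseteq> G q" and spn: "\<And>q v. v \<in> G q \<Longrightarrow> \<exists>z\<in>Z q. \<exists>g\<in>G (q+1). v = z + g"
  shows "G p = span (\<Union>q\<in>{p..}. Z q)"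
proof
  have "Z q \<subseteq> G p" if "p \<le> q" for q
    using ZG decreasing_family_le[where G=G, OF dec that] by blast
  then show "span (\<Union>q\<in>{p..}. Z q) \<subseteq> G p"
    by (intro span_minimal[OF _ subG] UN_least) simp
next
  have "G i \<subseteq> span (\<Union>q\<in>{i..}. Z q)" if "i \<le> P" for i
    using that
  proof (induction i rule: int_le_induct)
    case base
    then show ?case using bnd span_zero by simp
  next
    case (step i)
    show ?case
    proof
      fix v assume "v \<in> G (i - 1)"
      then have "\<exists>z\<in>Z (i - 1). \<exists>g\<in>G i. v = z + g" using spn[of v "i - 1"] by simp
      then obtain z g where zg: "z \<in> Z (i - 1)" "g \<in> G i" "v = z + g" by blast
      have "(\<Union>q\<in>{i..}. Z q) \<subseteq> (\<Union>q\<in>{i - 1..}. Z q)" by (rule UN_mono) simp_all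
      then have "g \<in> span (\<Union>q\<in>{i - 1..}. Z q)" using zg(2) step.IH span_mono by blast
      moreover have "z \<in> span (\<Union>q\<in>{i - 1..}. Z q)"
        using zg(1) by (intro span_base UN_I[of "i - 1"]) simp_all
      ultimately show "v \<in> span (\<Union>q\<in>{i - 1..}. Z q)" using zg(3) span_add by blast
    qed
  qed
  moreover have "G p \<subseteq> {0}" if "P \<le> p"
    using decreasing_family_le[where G=G, OF dec that] bnd by blast
  ultimately show "G p \<subseteq> span (\<Union>q\<in>{p..}. Z q)"
    using span_zero by (cases "p \<le> P") force+
qed

lemma span_level_complements:
  fixes G :: "int \<Rightarrow> 'b set"
  assumes dec: "\<And>q. G (q+1) \<subseteq> G q" and subG: "\<And>q. subspace (G q)" and bnd: "G P = {0}"
  shows "G p = span (\<Union>q\<in>{p..}. compl_subspace scale (G (q+1)) (G q))"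
proof (rule span_levels[where G=G, OF dec subG bnd])
  show "compl_subspace scale (G (q+1)) (G q) \<subseteq> G q" for q
    using compl_subspace(2)[OF subG subG dec] .
  show "\<exists>z\<in>compl_subspace scale (G (q+1)) (G q). \<exists>g\<in>G (q+1). v = z + g" if "v \<in> G q" for q v
    using compl_subspace(4)[OF subG subG dec that] by (metis add.commute)
qed

lemma independent_level_complements:
  fixes G :: "int \<Rightarrow> 'b set"
  assumes dec: "\<And>q. G (q+1) \<subseteq> G q" and subG: "\<And>q. subspace (G q)"
  shows "independent_family (\<lambda>q. compl_subspace scale (G (q+1)) (G q))"
  by (rule independent_levels[where G=G, OF dec subG]) (use compl_subspace(2,3)[OF subG subG dec] in blast)+

lemma filtered_split_exists:
  fixes G X Y :: "int \<Rightarrow> 'b set"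
  assumes dec: "\<And>q. G (q+1) \<subseteq> G q" and subG: "\<And>q. subspace (G q)" and bnd: "G P = {0}"
    and XG: "\<And>q. X q \<subseteq> G q" and YG: "\<And>q. Y q \<subseteq> G q"
    and spn: "\<And>q v. v \<in> G q \<Longrightarrow> \<exists>x\<in>X q. \<exists>y\<in>Y q. \<exists>g\<in>G (q+1). v = x + y + g"
    and v: "v \<in> G p"
  shows "\<exists>x \<in> span (\<Union>q. X q) \<inter> G p. \<exists>y \<in> span (\<Union>q. Y q) \<inter> G p. v = x + y"
proof -
  let ?X = "\<Union>q\<in>{p..}. X q" and ?Y = "\<Union>q\<in>{p..}. Y q"
  let ?Z = "\<lambda>q. {x + y |x y. x \<in> X q \<and> y \<in> Y q}"
  have ZG: "?Z q \<subseteq> G q" for q using XG YG subspace_add[OF subG] by blast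
  have "\<exists>z\<in>?Z q. \<exists>g\<in>G (q+1). w = z + g" if "w \<in> G q" for q w
    using spn[OF that] by blast
  then have "G p = span (\<Union>q\<in>{p..}. ?Z q)"
    by (rule span_levels[where G=G and Z="?Z", OF dec subG bnd ZG])
  also have "\<dots> \<subseteq> span (?X \<union> ?Y)"
  proof (rule span_minimal[OF _ subspace_span], rule UN_least)
    fix q assume "q \<in> {p..}"
    then show "?Z q \<subseteq> span (?X \<union> ?Y)" by (blast intro: span_add span_base)
  qed
  finally obtain x y where xy: "x \<in> span ?X" "y \<in> span ?Y" "v = x + y"
    using v unfolding span_Un by blast
  have "X q \<subseteq> G p" "Y q \<subseteq> G p" if "q \<in> {p..}" for q
    using XG[of q] YG[of q] decreasing_family_le[where G=G, OF dec, of p q] that by auto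
  then have "span ?X \<subseteq> G p" "span ?Y \<subseteq> G p"
    by (intro span_minimal[OF _ subG] UN_least; simp)+
  moreover have "span ?X \<subseteq> span (\<Union>q. X q)" "span ?Y \<subseteq> span (\<Union>q. Y q)"
    by (intro span_mono UN_mono; simp)+
  ultimately show ?thesis using xy by blast
qed

lemma filtered_split_unique:
  fixes G X Y :: "int \<Rightarrow> 'b set"
  assumes dec: "\<And>q. G (q+1) \<subseteq> G q" and subG: "\<And>q. subspace (G q)"
    and subX: "\<And>q. subspace (X q)" and subY: "\<And>q. subspace (Y q)"
    and XG: "\<And>q. X q \<subseteq> G q" and YG: "\<And>q. Y q \<subseteq> G q"
    and ind: "\<And>q x y g. x \<in> X q \<Longrightarrow> y \<in> Y q \<Longrightarrow> g \<in> G (q+1) \<Longrightarrow> x + y + g = 0 \<Longrightarrow> x = 0 \<and> y = 0"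
    and x: "x \<in> span (\<Union>q. X q)" and y: "y \<in> span (\<Union>q. Y q)" and xy: "x + y = 0"
  shows "x = 0"
proof -
  obtain Q1 a where a: "finite Q1" "\<And>q. a q \<in> X q" "\<And>q. q \<notin> Q1 \<Longrightarrow> a q = 0" "x = (\<Sum>q\<in>Q1. a q)"
    using span_UN_subspace_sum[OF subX x] by blast
  obtain Q2 b where b: "finite Q2" "\<And>q. b q \<in> Y q" "\<And>q. q \<notin> Q2 \<Longrightarrow> b q = 0" "y = (\<Sum>q\<in>Q2. b q)"
    using span_UN_subspace_sum[OF subY y] by blast
  define Q where "Q = Q1 \<union> Q2"
  have fin: "finite Q" using a(1) b(1) Q_def by simp
  have "x = (\<Sum>q\<in>Q. a q)" "y = (\<Sum>q\<in>Q. b q)"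
    unfolding a(4) b(4) by (rule sum.mono_neutral_left; use fin a(3) b(3) Q_def in auto)+
  then have sum0: "(\<Sum>q\<in>Q. a q + b q) = 0" using xy by (simp add: sum.distrib)
  let ?Z = "\<lambda>q. {u + w |u w. u \<in> X q \<and> w \<in> Y q}"
  have indep: "independent_family ?Z"
  proof (rule independent_levels[where G=G, OF dec subG])
    show "?Z q \<subseteq> G q" for q using XG YG subspace_add[OF subG] by blast
    show "z = 0" if zZ: "z \<in> ?Z q" and zG: "z \<in> G (q+1)" for q z
    proof -
      obtain u w where uw: "u \<in> X q" "w \<in> Y q" "z = u + w" using zZ by blast
      have "u + w + (- z) = 0" using uw by simp
      then show "z = 0" using ind[OF uw(1,2) subspace_neg[OF subG zG]] uw(3) by simp
    qed
  qed
  have mem: "\<And>q. q \<in> Q \<Longrightarrow> a q + b q \<in> ?Z q" using a(2) b(2) by fast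
  have "\<forall>q\<in>Q. a q + b q = 0"
    using indep[unfolded independent_family_def, rule_format, OF fin mem sum0] by blast
  then have "\<forall>q\<in>Q. a q = 0" using ind[OF a(2) b(2) subspace_0[OF subG]] by simp
  then show ?thesis using \<open>x = (\<Sum>q\<in>Q. a q)\<close> by simp
qed

end

section \<open>A filtered Hodge decomposition\<close>

locale filtered_dga = vector_space sc for sc :: "'k::field \<Rightarrow> 'a::ab_group_add \<Rightarrow> 'a" +
  fixes A :: "int \<Rightarrow> 'a set" and F :: "int \<Rightarrow> int \<Rightarrow> 'a set" and d :: "int \<Rightarrow> 'a \<Rightarrow> 'a"
    and mu :: "int \<Rightarrow> int \<Rightarrow> 'a \<Rightarrow> 'a \<Rightarrow> 'a"
  assumes fdg: "filtered_dg_algebra sc A F d mu"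
begin

lemma dga: "dg_algebra sc A d mu" using fdg unfolding filtered_dg_algebra_def by blast
lemma filt: "filtration sc A F" using fdg unfolding filtered_dg_algebra_def by blast
lemma mu_F: "x \<in> F p n \<Longrightarrow> y \<in> F q m \<Longrightarrow> mu n m x y \<in> F (p + q) (n + m)"
  using fdg unfolding filtered_dg_algebra_def by simp

lemma A_subspace: "subspace (A n)" using dga unfolding dg_algebra_def graded_space_def by simp
lemma d_linear: "linear_on sc sc (A n) (d n)" using dga unfolding dg_algebra_def by simp
lemma d_A: "x \<in> A n \<Longrightarrow> d n x \<in> A (n + 1)" using dga unfolding dg_algebra_def by simp
lemma d_d: "x \<in> A n \<Longrightarrow> d (n + 1) (d n x) = 0" using dga unfolding dg_algebra_def by simp
lemma F_subspace: "subspace (F p n)" using filt unfolding filtration_def by simp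
lemma F_subset_A: "F p n \<subseteq> A n" using filt unfolding filtration_def by simp
lemma F_decreasing: "F (p + 1) n \<subseteq> F p n" using filt unfolding filtration_def by simp
lemma F_exhaustive: "x \<in> A n \<Longrightarrow> \<exists>p. x \<in> F p n"
  using filt unfolding filtration_def by blast
lemma F_bounded: "\<exists>p. F p n = {0}" using filt unfolding filtration_def by simp
lemma d_F: "x \<in> F p n \<Longrightarrow> d n x \<in> F p (n + 1)" using fdg unfolding filtered_dg_algebra_def by simp
lemma F_antimono: "p \<le> p' \<Longrightarrow> F p' n \<subseteq> F p n"
  using decreasing_family_le[where G="\<lambda>p. F p n", OF F_decreasing] by blast
lemma d_add: "x \<in> A n \<Longrightarrow> y \<in> A n \<Longrightarrow> d n (x + y) = d n x + d n y" using linear_on_add[OF d_linear] .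
lemma d_scale: "x \<in> A n \<Longrightarrow> d n (sc c x) = sc c (d n x)" using linear_on_scale[OF d_linear] .
lemma d_0 [simp]: "d n 0 = 0" using linear_on_0[OF d_linear A_subspace] .
lemma d_neg: "x \<in> A n \<Longrightarrow> d n (- x) = - d n x" using linear_on_neg[OF d_linear] .
lemma d_diff: "x \<in> A n \<Longrightarrow> y \<in> A n
    \<Longrightarrow> d n (x - y) = d n x - d n y" using linear_on_diff[OF d_linear A_subspace] .

definition near_cycles :: "int \<Rightarrow> int \<Rightarrow> 'a set" where
  "near_cycles q n = {x \<in> F q n. d n x \<in> F (q + 1) (n + 1)}"

lemma near_cycles_subspace: "subspace (near_cycles q n)"
  unfolding subspace_def near_cycles_def
proof (intro conjI ballI allI)
  show "0 \<in> {x \<in> F q n. d n x \<in> F (q + 1) (n + 1)}" using subspace_0[OF F_subspace] by simp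
next
  fix x y assume x: "x \<in> {x \<in> F q n. d n x \<in> F (q + 1) (n + 1)}" and y:
      "y \<in> {x \<in> F q n. d n x \<in> F (q + 1) (n + 1)}"
  then have "x \<in> A n" "y \<in> A n" using F_subset_A by blast+
  then show "x + y \<in> {x \<in> F q n. d n x \<in> F (q + 1) (n + 1)}"
    using x y d_add subspace_add[OF F_subspace] by auto
next
  fix c x assume x: "x \<in> {x \<in> F q n. d n x \<in> F (q + 1) (n + 1)}"
  then have "x \<in> A n" using F_subset_A by blast
  then show "sc c x \<in> {x \<in> F q n. d n x \<in> F (q + 1) (n + 1)}"
    using x d_scale subspace_scale[OF F_subspace] by auto
qed

lemma near_cycles_F: "near_cycles q n \<subseteq> F q n" unfolding near_cycles_def by blast

definition Cq :: "int \<Rightarrow> int \<Rightarrow> 'a set" where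
  "Cq q n = compl_subspace sc (near_cycles q n) (F q n)"

lemma Cq_subspace: "subspace (Cq q n)" unfolding Cq_def
    using compl_subspace(1)[OF near_cycles_subspace F_subspace near_cycles_F] .
lemma Cq_F: "Cq q n \<subseteq> F q n" unfolding Cq_def
    using compl_subspace(2)[OF near_cycles_subspace F_subspace near_cycles_F] .
lemma Cq_A: "Cq q n \<subseteq> A n" using Cq_F F_subset_A by blast
lemma Cq_split: "v \<in> F q n \<Longrightarrow> \<exists>u\<in>near_cycles q n. \<exists>w\<in>Cq q n. v = u + w"
  unfolding Cq_def using compl_subspace(4)[OF near_cycles_subspace F_subspace near_cycles_F] .
lemma Cq_strict: "k \<in> Cq q n \<Longrightarrow> d n k \<in> F (q + 1) (n + 1) \<Longrightarrow> k = 0"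
proof -
  assume k: "k \<in> Cq q n" "d n k \<in> F (q + 1) (n + 1)"
  then have "k \<in> near_cycles q n" using Cq_F near_cycles_def by blast
  then show "k = 0" using compl_subspace(3)[OF near_cycles_subspace F_subspace near_cycles_F] k(1)
      unfolding Cq_def by blast
qed

definition C :: "int \<Rightarrow> 'a set" where "C n = span (\<Union>q. Cq q n)"

lemma C_A: "C n \<subseteq> A n"
  unfolding C_def by (rule span_minimal[OF _ A_subspace]) (use Cq_A in blast)
lemma Cq_C: "Cq q n \<subseteq> C n"
proof
  fix x assume "x \<in> Cq q n"
  then have "x \<in> (\<Union>q. Cq q n)" by blast
  then show "x \<in> C n" unfolding C_def by (rule span_base)
qed

lemma C_F_of_d_F:
  assumes k: "k \<in> C n" and dk: "d n k \<in> F p (n + 1)"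
  shows "k \<in> F p n"
proof -
  obtain Q v where Qv: "finite Q" "\<And>q. v q \<in> Cq q n" "k = (\<Sum>q\<in>Q. v q)"
    using span_UN_subspace_sum[of "\<lambda>q. Cq q n", OF Cq_subspace] k unfolding C_def by metis
  have "d n k = (\<Sum>q\<in>Q. d n (v q))"
    unfolding Qv(3) by (rule linear_on_sum[OF d_linear A_subspace]) (use Qv(2) Cq_A in blast)
  then have s: "(\<Sum>q\<in>Q. d n (v q)) \<in> F p (n + 1)" using dk by simp
  have dCq: "\<And>q. d n ` Cq q n \<subseteq> F q (n + 1)" using Cq_F d_F by blast
  have strict: "\<And>q z. z \<in> d n ` Cq q n \<Longrightarrow> z \<in> F (q + 1) (n + 1) \<Longrightarrow> z = 0"
    using Cq_strict by fastforce
  have vZ: "\<And>q. q \<in> Q \<Longrightarrow> d n (v q) \<in> d n ` Cq q n" using Qv(2) by blast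
  have "\<forall>q\<in>Q. q < p \<longrightarrow> d n (v q) = 0"
    by (rule level_sum_vanishes[where G="\<lambda>q. F q (n+1)" and Z="\<lambda>q. d n ` Cq q n",
          OF F_decreasing F_subspace dCq strict Qv(1) vZ s])
  then have "v q \<in> F p n" if "q \<in> Q" for q
  proof (cases "q < p")
    case True
    then have "v q = 0"
      using Cq_strict[of "v q" q n] Qv(2) that subspace_0[OF F_subspace] by (simp add: \<open>\<forall>q\<in>Q. _\<close>)
    then show ?thesis using subspace_0[OF F_subspace] by simp
  next
    case False
    then show ?thesis using Cq_F Qv(2) F_antimono[of p q n] by force
  qed
  then show ?thesis unfolding Qv(3) by (intro subspace_sum[OF F_subspace])
qed

lemma C_d_inj: "k \<in> C n \<Longrightarrow> d n k = 0 \<Longrightarrow> k = 0"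
proof -
  assume k: "k \<in> C n" "d n k = 0"
  obtain p where p: "F p n = {0}" using F_bounded by blast
  have "d n k \<in> F p (n + 1)" using k(2) subspace_0[OF F_subspace] by simp
  then have "k \<in> F p n" using C_F_of_d_F[OF k(1)] by blast
  then show "k = 0" using p by blast
qed

definition Bq :: "int \<Rightarrow> int \<Rightarrow> 'a set" where "Bq q n = d (n - 1) ` Cq q (n - 1)"

lemma Bq_subspace: "subspace (Bq q n)"
  unfolding Bq_def by (rule linear_on_image_subspace[OF d_linear A_subspace Cq_subspace Cq_A])

lemma Bq_F: "Bq q n \<subseteq> F q n"
proof
  fix x assume "x \<in> Bq q n"
  then obtain k where k: "k \<in> Cq q (n - 1)" "x = d (n - 1) k" unfolding Bq_def by blast
  then have "k \<in> F q (n - 1)" using Cq_F by blast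
  then have "d (n - 1) k \<in> F q (n - 1 + 1)" by (rule d_F)
  then show "x \<in> F q n" using k by simp
qed

lemma Bq_strict: "x \<in> Bq q n \<Longrightarrow> x \<in> F (q + 1) n \<Longrightarrow> x = 0"
proof -
  assume x: "x \<in> Bq q n" "x \<in> F (q + 1) n"
  then obtain k where k: "k \<in> Cq q (n - 1)" "x = d (n - 1) k" unfolding Bq_def by blast
  then have "d (n - 1) k \<in> F (q + 1) (n - 1 + 1)" using x by simp
  then have "k = 0" using Cq_strict k(1) by blast
  then show "x = 0" using k by simp
qed

definition FCBq :: "int \<Rightarrow> int \<Rightarrow> 'a set" where
  "FCBq q n = {u + c |u c. u \<in> {a + b |a b. a \<in> F (q + 1) n \<and> b \<in> Cq q n} \<and> c \<in> Bq q n}"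

lemma FCBq_subspace: "subspace (FCBq q n)"
  unfolding FCBq_def by (intro subspace_sums F_subspace Cq_subspace Bq_subspace)

lemma FCBq_F: "FCBq q n \<subseteq> F q n"
proof
  fix x assume "x \<in> FCBq q n"
  then obtain a b c where abc: "a \<in> F (q + 1) n" "b \<in> Cq q n" "c \<in> Bq q n" "x = a + b + c"
    unfolding FCBq_def by blast
  have "a \<in> F q n" using abc(1) F_decreasing by blast
  moreover have "b \<in> F q n" using abc(2) Cq_F by blast
  moreover have "c \<in> F q n" using abc(3) Bq_F by blast
  ultimately show "x \<in> F q n" using abc(4) subspace_add[OF F_subspace] by metis
qed

definition Hq :: "int \<Rightarrow> int \<Rightarrow> 'a set" where "Hq q n = compl_subspace sc (FCBq q n) (F q n)"

lemma Hq_subspace: "subspace (Hq q n)" unfolding Hq_def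
    using compl_subspace(1)[OF FCBq_subspace F_subspace FCBq_F] .
lemma Hq_F: "Hq q n \<subseteq> F q n" unfolding Hq_def
    using compl_subspace(2)[OF FCBq_subspace F_subspace FCBq_F] .
lemma Hq_split: "v \<in> F q n \<Longrightarrow> \<exists>u\<in>FCBq q n. \<exists>w\<in>Hq q n. v = u + w"
  unfolding Hq_def using compl_subspace(4)[OF FCBq_subspace F_subspace FCBq_F] .
lemma Hq_zero: "w \<in> Hq q n \<Longrightarrow> w \<in> FCBq q n \<Longrightarrow> w = 0"
  unfolding Hq_def using compl_subspace(3)[OF FCBq_subspace F_subspace FCBq_F] by blast

definition HCq :: "int \<Rightarrow> int \<Rightarrow> 'a set" where
  "HCq q n = {k + w |k w. k \<in> Cq q n \<and> w \<in> Hq q n}"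

lemma HCq_subspace: "subspace (HCq q n)" unfolding HCq_def
    by (intro subspace_sums Cq_subspace Hq_subspace)

lemma HCq_F: "HCq q n \<subseteq> F q n"
proof
  fix x assume "x \<in> HCq q n"
  then obtain k w where kw: "k \<in> Cq q n" "w \<in> Hq q n" "x = k + w" unfolding HCq_def by blast
  have "k \<in> F q n" using kw(1) Cq_F by blast
  moreover have "w \<in> F q n" using kw(2) Hq_F by blast
  ultimately show "x \<in> F q n" using kw(3) subspace_add[OF F_subspace] by metis
qed

lemma Cq_HCq: "Cq q n \<subseteq> HCq q n"
proof
  fix k assume "k \<in> Cq q n"
  moreover have "0 \<in> Hq q n" using subspace_0[OF Hq_subspace] .
  ultimately have "k + 0 \<in> HCq q n" unfolding HCq_def by blast
  then show "k \<in> HCq q n" by simp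
qed

lemma Bq_HCq_independent:
  assumes x: "x \<in> Bq q n" and y: "y \<in> HCq q n" and g: "g \<in> F (q + 1) n" and s: "x + y + g = 0"
  shows "x = 0 \<and> y = 0"
proof -
  obtain k w where kw: "k \<in> Cq q n" "w \<in> Hq q n" "y = k + w" using y unfolding HCq_def by blast
  have "g + k \<in> {a + b |a b. a \<in> F (q + 1) n \<and> b \<in> Cq q n}" using g kw(1) by blast
  then have "(g + k) + x \<in> FCBq q n" unfolding FCBq_def using x by blast
  then have "- ((g + k) + x) \<in> FCBq q n" by (rule subspace_neg[OF FCBq_subspace])
  moreover have "w = - ((g + k) + x)" using s kw(3)
    by (simp add: algebra_simps eq_neg_iff_add_eq_0)
  ultimately have w0: "w = 0" using Hq_zero kw(2) by metis
  have xA: "x \<in> A n" using x Bq_F F_subset_A by blast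
  have kA: "k \<in> A n" using kw(1) Cq_A by blast
  have gA: "g \<in> A n" using g F_subset_A by blast
  obtain k' where k': "k' \<in> Cq q (n - 1)" "x = d (n - 1) k'" using x unfolding Bq_def by blast
  have k'A: "k' \<in> A (n - 1)" using k'(1) Cq_A by blast
  have dx: "d n x = 0" using d_d[OF k'A] k'(2) by simp
  have "x + k + g = 0" using s kw(3) w0 by simp
  then have "d n (x + k + g) = 0" by simp
  then have "d n x + d n k + d n g = 0" using d_add xA kA gA subspace_add[OF A_subspace] by simp
  then have "d n k = - d n g" using dx by (simp add: eq_neg_iff_add_eq_0)
  moreover have "d n g \<in> F (q + 1) (n + 1)" using g d_F by blast
  ultimately have "d n k \<in> F (q + 1) (n + 1)" using subspace_neg[OF F_subspace] by simp
  then have k0: "k = 0" using Cq_strict kw(1) by blast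
  then have "x = - g" using \<open>x + k + g = 0\<close> by (simp add: eq_neg_iff_add_eq_0)
  then have "x \<in> F (q + 1) n" using g subspace_neg[OF F_subspace] by simp
  then have x0: "x = 0" using Bq_strict x by blast
  show ?thesis using x0 k0 w0 kw(3) by simp
qed

lemma F_level_split: "v \<in> F q n \<Longrightarrow> \<exists>x\<in>Bq q n. \<exists>y\<in>HCq q n. \<exists>g\<in>F (q + 1) n. v = x + y + g"
proof -
  assume v: "v \<in> F q n"
  obtain u w where uw: "u \<in> FCBq q n" "w \<in> Hq q n" "v = u + w" using Hq_split[OF v] by blast
  obtain a b c where abc: "a \<in> F (q + 1) n" "b \<in> Cq q n" "c \<in> Bq q n" "u = a + b + c"
    using uw(1) unfolding FCBq_def by blast
  have "b + w \<in> HCq q n" unfolding HCq_def using abc(2) uw(2) by blast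
  moreover have "v = c + (b + w) + a" using uw(3) abc(4) by (simp add: algebra_simps)
  ultimately show ?thesis using abc(1,3) by blast
qed

definition B :: "int \<Rightarrow> 'a set" where "B n = span (\<Union>q. Bq q n)"
definition HC :: "int \<Rightarrow> 'a set" where "HC n = span (\<Union>q. HCq q n)"

lemma C_HC: "C n \<subseteq> HC n"
  unfolding C_def HC_def by (rule span_mono) (use Cq_HCq in blast)

lemma B_HC_decomp:
  assumes "v \<in> F p n"
  shows "\<exists>x \<in> B n \<inter> F p n. \<exists>y \<in> HC n \<inter> F p n. v = x + y"
proof -
  obtain p0 where p0: "F p0 n = {0}" using F_bounded by blast
  show ?thesis unfolding B_def HC_def
    by (rule filtered_split_exists[where G="\<lambda>q. F q n", OF F_decreasing F_subspace p0 Bq_F HCq_F F_level_split assms])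
qed

lemma B_HC_disjoint:
  assumes "x \<in> B n" "y \<in> HC n" "x + y = 0"
  shows "x = 0"
  by (rule filtered_split_unique[where G="\<lambda>q. F q n" and X="\<lambda>q. Bq q n" and Y="\<lambda>q. HCq q n",
        OF F_decreasing F_subspace Bq_subspace HCq_subspace Bq_F HCq_F Bq_HCq_independent assms[unfolded B_def HC_def]])

lemma B_HC_unique:
  assumes "x1 \<in> B n" "y1 \<in> HC n" "x2 \<in> B n" "y2 \<in> HC n" "x1 + y1 = x2 + y2"
  shows "x1 = x2"
proof -
  have "x1 - x2 \<in> B n" using assms(1,3) span_diff unfolding B_def by blast
  moreover have "y1 - y2 \<in> HC n" using assms(2,4) span_diff unfolding HC_def by blast
  moreover have "(x1 - x2) + (y1 - y2) = 0" using assms(5) by (simp add: algebra_simps)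
  ultimately have "x1 - x2 = 0" by (rule B_HC_disjoint)
  then show ?thesis by simp
qed

definition proj_B :: "int \<Rightarrow> 'a \<Rightarrow> 'a" where
  "proj_B n v = (THE x. x \<in> B n \<and> (\<exists>y\<in>HC n. v = x + y))"

lemma proj_B_eq:
  assumes "x \<in> B n" "y \<in> HC n" "v = x + y"
  shows "proj_B n v = x"
  unfolding proj_B_def
proof (rule the_equality)
  show "x \<in> B n \<and> (\<exists>y\<in>HC n. v = x + y)" using assms by blast
next
  fix x' assume "x' \<in> B n \<and> (\<exists>y\<in>HC n. v = x' + y)"
  then obtain y' where "x' \<in> B n" "y' \<in> HC n" "v = x' + y'" by blast
  then show "x' = x" using B_HC_unique[of x' n y' x y] assms by simp
qed

lemma proj_B_props:
  assumes "v \<in> F p n"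
  shows "proj_B n v \<in> B n \<inter> F p n" "v - proj_B n v \<in> HC n \<inter> F p n"
proof -
  obtain x y where xy: "x \<in> B n \<inter> F p n" "y \<in> HC n \<inter> F p n" "v = x + y"
    using B_HC_decomp[OF assms] by blast
  have "proj_B n v = x" using proj_B_eq xy by blast
  then show "proj_B n v \<in> B n \<inter> F p n" "v - proj_B n v \<in> HC n \<inter> F p n" using xy by auto
qed

lemma proj_B_B: "v \<in> A n \<Longrightarrow> proj_B n v \<in> B n" using F_exhaustive proj_B_props(1) by blast
lemma proj_B_HC: "v \<in> A n \<Longrightarrow> v - proj_B n v \<in> HC n" using F_exhaustive proj_B_props(2) by blast
lemma proj_B_id: "x \<in> B n
    \<Longrightarrow> proj_B n x = x" using proj_B_eq[of x n 0 x] span_zero unfolding HC_def by simp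
lemma proj_B_C: "k \<in> C n \<Longrightarrow> proj_B n k = 0"
  using proj_B_eq[of 0 n k k] span_zero C_HC unfolding B_def by auto

lemma proj_B_linear: "linear_on sc sc (A n) (proj_B n)"
  unfolding linear_on_def
proof (intro conjI ballI allI)
  fix x y assume x: "x \<in> A n" and y: "y \<in> A n"
  have "proj_B n x + proj_B n y \<in> B n" using proj_B_B[OF x] proj_B_B[OF y] span_add unfolding B_def
      by blast
  moreover have "(x - proj_B n x) + (y - proj_B n y) \<in> HC n"
      using proj_B_HC[OF x] proj_B_HC[OF y] span_add unfolding HC_def by blast
  moreover have "x + y = (proj_B n x + proj_B n y) + ((x - proj_B n x) + (y - proj_B n y))"
      by (simp add: algebra_simps)
  ultimately show "proj_B n (x + y) = proj_B n x + proj_B n y" by (rule proj_B_eq)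
next
  fix c x assume x: "x \<in> A n"
  have "sc c (proj_B n x) \<in> B n" using proj_B_B[OF x] span_scale unfolding B_def by blast
  moreover have "sc c (x - proj_B n x) \<in> HC n" using proj_B_HC[OF x] span_scale unfolding HC_def
      by blast
  moreover have "sc c x = sc c (proj_B n x) + sc c (x - proj_B n x)"
      by (simp add: scale_right_diff_distrib)
  ultimately show "proj_B n (sc c x) = sc c (proj_B n x)" by (rule proj_B_eq)
qed

lemma B_eq: "B n = d (n - 1) ` C (n - 1)"
proof -
  have S: "(\<Union>q. Cq q (n - 1)) \<subseteq> A (n - 1)" using Cq_A by blast
  have "d (n - 1) ` C (n - 1) = span (d (n - 1) ` (\<Union>q. Cq q (n - 1)))"
    unfolding C_def by (rule linear_on_span_image[OF d_linear A_subspace S])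
  also have "d (n - 1) ` (\<Union>q. Cq q (n - 1)) = (\<Union>q. Bq q n)" unfolding Bq_def by blast
  finally show ?thesis unfolding B_def by simp
qed

lemma d_C_B: "k \<in> C (n - 1) \<Longrightarrow> d (n - 1) k \<in> B n" using B_eq by blast
lemma B_d: "y \<in> B n \<Longrightarrow> \<exists>k\<in>C (n - 1). d (n - 1) k = y"
  unfolding B_eq by (simp add: image_iff eq_commute)

definition d_inv :: "int \<Rightarrow> 'a \<Rightarrow> 'a" where
  "d_inv n y = (THE k. k \<in> C (n - 1) \<and> d (n - 1) k = y)"

lemma d_inv_eq: "k \<in> C (n - 1) \<Longrightarrow> d (n - 1) k = y \<Longrightarrow> d_inv n y = k"
  unfolding d_inv_def
proof (rule the_equality)
  assume "k \<in> C (n - 1)" "d (n - 1) k = y"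
  then show "k \<in> C (n - 1) \<and> d (n - 1) k = y" by blast
next
  fix k' assume k: "k \<in> C (n - 1)" "d (n - 1) k = y" and k': "k' \<in> C (n - 1) \<and> d (n - 1) k' = y"
  have "k' - k \<in> C (n - 1)" using k(1) k' span_diff unfolding C_def by blast
  moreover have "d (n - 1) (k' - k) = 0" using d_diff k(1) k' C_A k(2) by (metis diff_self subsetD)
  ultimately have "k' - k = 0" by (rule C_d_inj)
  then show "k' = k" by simp
qed

lemma d_inv_props: "y \<in> B n \<Longrightarrow> d_inv n y \<in> C (n - 1) \<and> d (n - 1) (d_inv n y) = y"
  using B_d d_inv_eq by metis

lemma d_inv_F: "y \<in> B n \<Longrightarrow> y \<in> F p n \<Longrightarrow> d_inv n y \<in> F p (n - 1)"
  using d_inv_props C_F_of_d_F[of "d_inv n y" "n - 1" p] by simp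

lemma d_inv_zero: "d_inv n 0 = 0"
  using d_inv_eq[of 0 n 0] span_zero unfolding C_def by simp

lemma d_inv_d: "k \<in> C (n - 1) \<Longrightarrow> d_inv n (d (n - 1) k) = k" using d_inv_eq by blast

lemma d_inv_add: "y1 \<in> B n \<Longrightarrow> y2 \<in> B n \<Longrightarrow> d_inv n (y1 + y2) = d_inv n y1 + d_inv n y2"
proof -
  assume y: "y1 \<in> B n" "y2 \<in> B n"
  have k1: "d_inv n y1 \<in> C (n - 1)" "d (n - 1) (d_inv n y1) = y1" using d_inv_props[OF y(1)] by auto
  have k2: "d_inv n y2 \<in> C (n - 1)" "d (n - 1) (d_inv n y2) = y2" using d_inv_props[OF y(2)] by auto
  have "d_inv n y1 + d_inv n y2 \<in> C (n - 1)" using k1 k2 span_add unfolding C_def by blast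
  moreover have "d (n - 1) (d_inv n y1 + d_inv n y2) = y1 + y2"
    using d_add k1 k2 C_A by (metis subsetD)
  ultimately show ?thesis using d_inv_eq by blast
qed

lemma d_inv_scale: "y \<in> B n \<Longrightarrow> d_inv n (sc c y) = sc c (d_inv n y)"
proof -
  assume y: "y \<in> B n"
  have k: "d_inv n y \<in> C (n - 1)" "d (n - 1) (d_inv n y) = y" using d_inv_props[OF y] by auto
  have "sc c (d_inv n y) \<in> C (n - 1)" using k span_scale unfolding C_def by blast
  moreover have "d (n - 1) (sc c (d_inv n y)) = sc c y"
    using d_scale k C_A by (metis subsetD)
  ultimately show ?thesis using d_inv_eq by blast
qed

definition h :: "int \<Rightarrow> 'a \<Rightarrow> 'a" where "h n x = - d_inv n (proj_B n x)"

lemma h_in_C: "x \<in> A n \<Longrightarrow> h n x \<in> C (n - 1)"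
  unfolding h_def using d_inv_props[OF proj_B_B] span_neg unfolding C_def by blast

lemma h_A: "x \<in> A n \<Longrightarrow> h n x \<in> A (n - 1)" using h_in_C C_A by blast

lemma h_F: "x \<in> F p n \<Longrightarrow> h n x \<in> F p (n - 1)"
proof -
  assume x: "x \<in> F p n"
  have "proj_B n x \<in> B n" "proj_B n x \<in> F p n" using proj_B_props(1)[OF x] by auto
  then have "d_inv n (proj_B n x) \<in> F p (n - 1)" by (rule d_inv_F)
  then show ?thesis unfolding h_def by (rule subspace_neg[OF F_subspace])
qed

lemma h_linear: "linear_on sc sc (A n) (h n)"
  unfolding linear_on_def
proof (intro conjI ballI allI)
  fix x y assume x: "x \<in> A n" and y: "y \<in> A n"
  show "h n (x + y) = h n x + h n y"
    unfolding h_def using linear_on_add[OF proj_B_linear x y] d_inv_add[OF proj_B_B[OF x] proj_B_B[OF y]] by simp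
next
  fix c x assume x: "x \<in> A n"
  show "h n (sc c x) = sc c (h n x)"
    unfolding h_def using linear_on_scale[OF proj_B_linear x] d_inv_scale[OF proj_B_B[OF x]]
      by (simp add: scale_minus_right)
qed

lemma h_C: "k \<in> C n \<Longrightarrow> h n k = 0"
  unfolding h_def using proj_B_C d_inv_zero by simp

lemma h_d_C: "k \<in> C (n - 1) \<Longrightarrow> h n (d (n - 1) k) = - k"
  unfolding h_def using proj_B_id[OF d_C_B] d_inv_d by simp

lemma h_A': "y \<in> A (n + 1) \<Longrightarrow> h (n + 1) y \<in> A n" using h_A[of y "n + 1"] by simp
lemma h_F': "y \<in> F p (n + 1) \<Longrightarrow> h (n + 1) y \<in> F p n" using h_F[of y p "n + 1"] by simp
lemma d_A': "y \<in> A (n - 1) \<Longrightarrow> d (n - 1) y \<in> A n" using d_A[of y "n - 1"] by simp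
lemma d_F': "y \<in> F p (n - 1) \<Longrightarrow> d (n - 1) y \<in> F p n" using d_F[of y p "n - 1"] by simp
lemma d_d': "y \<in> A (n - 1) \<Longrightarrow> d n (d (n - 1) y) = 0" using d_d[of y "n - 1"] by simp
lemma h_0 [simp]: "h n 0 = 0" using linear_on_0[OF h_linear A_subspace] .
lemma h_add: "x \<in> A n \<Longrightarrow> y \<in> A n \<Longrightarrow> h n (x + y) = h n x + h n y" using linear_on_add[OF h_linear] .
lemma h_scale: "x \<in> A n \<Longrightarrow> h n (sc c x) = sc c (h n x)" using linear_on_scale[OF h_linear] .
lemma h_d_C': "k \<in> C n \<Longrightarrow> h (n + 1) (d n k) = - k" using h_d_C[of k "n + 1"] by simp

definition P :: "int \<Rightarrow> 'a \<Rightarrow> 'a" where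
  "P n x = x + d (n - 1) (h n x) + h (n + 1) (d n x)"

lemma P_A: "x \<in> A n \<Longrightarrow> P n x \<in> A n"
  unfolding P_def using d_A' h_A h_A' d_A subspace_add[OF A_subspace] by metis

lemma P_F: "x \<in> F p n \<Longrightarrow> P n x \<in> F p n"
  unfolding P_def using d_F' h_F h_F' d_F subspace_add[OF F_subspace] by metis

lemma P_homotopy: "P n x - x = d (n - 1) (h n x) + h (n + 1) (d n x)"
  unfolding P_def by (simp add: algebra_simps)

lemma P_linear: "linear_on sc sc (A n) (P n)"
  unfolding linear_on_def
proof (intro conjI ballI allI)
  fix x y assume x: "x \<in> A n" and y: "y \<in> A n"
  have hx: "h n x \<in> A (n - 1)" "h n y \<in> A (n - 1)" using h_A x y by auto
  have dx: "d n x \<in> A (n + 1)" "d n y \<in> A (n + 1)" using d_A x y by auto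
  show "P n (x + y) = P n x + P n y"
    unfolding P_def using h_add[OF x y] d_add[OF x y] d_add[OF hx] h_add[OF dx]
      by (simp add: algebra_simps)
next
  fix c x assume x: "x \<in> A n"
  have hx: "h n x \<in> A (n - 1)" using h_A x by auto
  have dx: "d n x \<in> A (n + 1)" using d_A x by auto
  show "P n (sc c x) = sc c (P n x)"
    unfolding P_def using h_scale[OF x] d_scale[OF x] d_scale[OF hx] h_scale[OF dx]
    by (simp add: scale_right_distrib)
qed

lemma P_d_commute: "x \<in> A n \<Longrightarrow> P (n + 1) (d n x) = d n (P n x)"
proof -
  assume x: "x \<in> A n"
  have hx: "h n x \<in> A (n - 1)" using h_A x by auto
  have dx: "d n x \<in> A (n + 1)" using d_A x by auto
  have dhx: "d (n - 1) (h n x) \<in> A n" using d_A' hx by auto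
  have hdx: "h (n + 1) (d n x) \<in> A n" using h_A' dx by auto
  have "P (n + 1) (d n x) = d n x + d n (h (n + 1) (d n x))"
    unfolding P_def using d_d[OF x] by simp
  moreover have "d n (P n x) = d n x + d n (d (n - 1) (h n x)) + d n (h (n + 1) (d n x))"
    unfolding P_def using d_add x dhx hdx subspace_add[OF A_subspace] by metis
  ultimately show ?thesis using d_d'[OF hx] by simp
qed

lemma h_P: "x \<in> A n \<Longrightarrow> h n (P n x) = 0"
proof -
  assume x: "x \<in> A n"
  have hx: "h n x \<in> C (n - 1)" using h_in_C x by auto
  have hxA: "h n x \<in> A (n - 1)" using h_A x by auto
  have dx: "d n x \<in> A (n + 1)" using d_A x by auto
  have dhx: "d (n - 1) (h n x) \<in> A n" using d_A' hxA by auto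
  have hdx: "h (n + 1) (d n x) \<in> A n" using h_A' dx by auto
  have hdxK: "h (n + 1) (d n x) \<in> C n" using h_in_C[OF dx] by simp
  have "h n (P n x) = h n x + h n (d (n - 1) (h n x)) + h n (h (n + 1) (d n x))"
    unfolding P_def using h_add x dhx hdx subspace_add[OF A_subspace] by metis
  then show ?thesis using h_d_C[OF hx] h_C[OF hdxK] by simp
qed

lemma P_idem: "x \<in> A n \<Longrightarrow> P n (P n x) = P n x"
proof -
  assume x: "x \<in> A n"
  have "h n (P n x) = 0" using h_P[OF x] .
  moreover have "d n (P n x) = P (n + 1) (d n x)" using P_d_commute[OF x] by simp
  moreover have "h (n + 1) (P (n + 1) (d n x)) = 0" using h_P d_A x by blast
  ultimately show ?thesis unfolding P_def[of n "P n x"] by simp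
qed

lemma P_d_C: "k \<in> C n \<Longrightarrow> P (n + 1) (d n k) = 0"
proof -
  assume k: "k \<in> C n"
  have kA: "k \<in> A n" using k C_A by blast
  show ?thesis unfolding P_def using h_d_C'[OF k] d_d[OF kA] d_neg[OF kA] by simp
qed

definition M :: "int \<Rightarrow> 'a set" where "M n = {x \<in> A n. P n x = x}"

lemma M_A: "M n \<subseteq> A n" unfolding M_def by blast
lemma M_subspace: "subspace (M n)"
  unfolding subspace_def M_def
proof (intro conjI ballI allI)
  show "0 \<in> {x \<in> A n. P n x = x}"
      using subspace_0[OF A_subspace] linear_on_0[OF P_linear A_subspace] by simp
next
  fix x y assume x: "x \<in> {x \<in> A n. P n x = x}" and y: "y \<in> {x \<in> A n. P n x = x}"
  then show "x + y \<in> {x \<in> A n. P n x = x}"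
      using linear_on_add[OF P_linear] subspace_add[OF A_subspace] by auto
next
  fix c x assume x: "x \<in> {x \<in> A n. P n x = x}"
  then show "sc c x \<in> {x \<in> A n. P n x = x}"
      using linear_on_scale[OF P_linear] subspace_scale[OF A_subspace] by auto
qed

lemma P_M: "x \<in> A n \<Longrightarrow> P n x \<in> M n" unfolding M_def using P_A P_idem by blast
lemma M_P: "x \<in> M n \<Longrightarrow> P n x = x" unfolding M_def by blast
lemma d_M: "x \<in> M n \<Longrightarrow> d n x \<in> M (n + 1)"
  unfolding M_def using P_d_commute d_A by auto

lemma d_M_raises_filtration: "x \<in> F p n \<Longrightarrow> x \<in> M n \<Longrightarrow> d n x \<in> F (p + 1) (n + 1)"
proof -
  assume x: "x \<in> F p n" "x \<in> M n"
  obtain u w where uw: "u \<in> near_cycles p n" "w \<in> Cq p n" "x = u + w" using Cq_split[OF x(1)]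
      by blast
  have uA: "u \<in> A n" using uw(1) near_cycles_F F_subset_A by blast
  have wA: "w \<in> A n" using uw(2) Cq_A by blast
  have wK: "w \<in> C n" using uw(2) Cq_C by blast
  have du: "d n u \<in> F (p + 1) (n + 1)" using uw(1) unfolding near_cycles_def by blast
  have "d n x = P (n + 1) (d n x)" using P_d_commute M_P x(2) M_A by (metis subsetD)
  also have "\<dots> = P (n + 1) (d n u) + P (n + 1) (d n w)"
    using uw(3) d_add[OF uA wA] linear_on_add[OF P_linear d_A[OF uA] d_A[OF wA]] by simp
  also have "P (n + 1) (d n w) = 0" using P_d_C[OF wK] .
  finally show ?thesis using P_F[OF du] by simp
qed

lemma cycle_homologous_M:
  assumes y: "y \<in> F p n" "d n y = 0"
  shows "\<exists>x\<in>F p n \<inter> M n. d n x = 0 \<and> y - x \<in> d (n - 1) ` F p (n - 1)"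
proof -
  have yA: "y \<in> A n" using y F_subset_A by blast
  have "P n y \<in> F p n \<inter> M n" using P_F[OF y(1)] P_M[OF yA] by blast
  moreover have "d n (P n y) = 0" using P_d_commute[OF yA] y(2) linear_on_0[OF P_linear A_subspace]
      by simp
  moreover have "y - P n y = d (n - 1) (- h n y)"
  proof -
    have "P n y - y = d (n - 1) (h n y)" using P_homotopy[of n y] y(2) h_0 by simp
    then show ?thesis using d_neg h_A yA by (metis minus_diff_eq)
  qed
  moreover have "- h n y \<in> F p (n - 1)" using h_F[OF y(1)] subspace_neg[OF F_subspace] by blast
  ultimately show ?thesis by blast
qed

lemma boundary_in_M:
  assumes x: "x \<in> F p n" "x \<in> M n" "a \<in> F p (n - 1)" "x = d (n - 1) a"
  shows "\<exists>b\<in>F p (n - 1) \<inter> M (n - 1). x = d (n - 1) b"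
proof -
  have aA: "a \<in> A (n - 1)" using x(3) F_subset_A by blast
  have "x = P n x" using M_P x(2) by simp
  also have "\<dots> = d (n - 1) (P (n - 1) a)" using P_d_commute[OF aA] x(4) by simp
  finally show ?thesis using P_F[OF x(3)] P_M[OF aA] by blast
qed

definition FM :: "int \<Rightarrow> int \<Rightarrow> 'a set" where "FM p n = F p n \<inter> M n"

lemma FM_subspace: "subspace (FM p n)" unfolding FM_def
    by (rule subspace_inter[OF F_subspace M_subspace])
lemma FM_decreasing: "FM (p + 1) n \<subseteq> FM p n" unfolding FM_def using F_decreasing by blast
lemma FM_M: "FM p n \<subseteq> M n" unfolding FM_def by blast
lemma FM_bounded: "\<exists>p. FM p n = {0}"
proof -
  obtain p where "F p n = {0}" using F_bounded by blast
  then have "FM p n = {0}" unfolding FM_def using subspace_0[OF M_subspace] by blast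
  then show ?thesis by blast
qed

text \<open>Mq q n is the bigraded piece M^(q, n-q).\<close>

definition Mq :: "int \<Rightarrow> int \<Rightarrow> 'a set" where "Mq q n = compl_subspace sc (FM (q + 1) n) (FM q n)"

lemma Mq_subspace: "subspace (Mq q n)" unfolding Mq_def
    using compl_subspace(1)[OF FM_subspace FM_subspace FM_decreasing] .
lemma Mq_M: "Mq q n \<subseteq> M n" unfolding Mq_def
    using compl_subspace(2)[OF FM_subspace FM_subspace FM_decreasing] FM_M by blast
lemma FM_span: "FM p n = span (\<Union>q\<in>{p..}. Mq q n)"
proof -
  obtain p0 where "FM p0 n = {0}" using FM_bounded by blast
  then show ?thesis unfolding Mq_def
    by (rule span_level_complements[where G="\<lambda>q. FM q n", OF FM_decreasing FM_subspace])
qed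

lemma Mq_independent: "independent_family (\<lambda>q. Mq q n)"
  unfolding Mq_def by (rule independent_level_complements[where G="\<lambda>q. FM q n", OF FM_decreasing FM_subspace])

end

section \<open>Combinatorics of the A-infinity relations\<close>

lemma homog_take: "homog V ds xs \<Longrightarrow> homog V (take k ds) (take k xs)"
  unfolding homog_def by auto
lemma homog_drop: "homog V ds xs \<Longrightarrow> homog V (drop k ds) (drop k xs)"
  unfolding homog_def by auto
lemma homog_append: "homog V ds xs \<Longrightarrow> homog V es ys \<Longrightarrow> homog V (ds @ es) (xs @ ys)"
  unfolding homog_def by (auto simp: nth_append)
lemma homog_single: "x \<in> V e \<Longrightarrow> homog V [e] [x]"
  unfolding homog_def by auto
lemma homog_length: "homog V ds xs \<Longrightarrow> length xs = length ds"
  unfolding homog_def by auto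
lemma homog_hd: "homog V ds xs \<Longrightarrow> length ds = 1 \<Longrightarrow> hd xs \<in> V (hd ds)"
  unfolding homog_def by (cases ds; cases xs) auto
lemma homog_update: "homog V ds xs \<Longrightarrow> i < length ds \<Longrightarrow> y \<in> V (ds ! i) \<Longrightarrow> homog V ds (xs[i := y])"
  unfolding homog_def by (auto simp: nth_list_update)

lemma sum_list_one: "length ds = 1 \<Longrightarrow> sum_list ds = hd ds"
  by (cases ds) auto

lemma psign_add: "psign (a + b) = (psign a * psign b :: 'k::field)"
  unfolding psign_def by auto
lemma psign_anti: "odd (a - b) \<Longrightarrow> psign a = - (psign b :: 'k::field)"
  unfolding psign_def by auto

definition ins_degs :: "nat \<Rightarrow> nat \<Rightarrow> int list \<Rightarrow> int list" where
  "ins_degs r s ds = take r ds @ [sum_list (take s (drop r ds)) + 2 - int s] @ drop (r + s) ds"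
definition ins_elems ::
    "(nat \<Rightarrow> int list \<Rightarrow> 'a list \<Rightarrow> 'a) \<Rightarrow> nat \<Rightarrow> nat \<Rightarrow> int list \<Rightarrow> 'a list \<Rightarrow> 'a list" where
  "ins_elems G r s ds xs
      = take r xs @ [G s (take s (drop r ds)) (take s (drop r xs))] @ drop (r + s) xs"

definition ins_pos :: "nat \<Rightarrow> (nat \<times> nat) set" where "ins_pos n = {(r, s). 1 \<le> s \<and> r + s \<le> n}"

lemma ins_pos_finite: "finite (ins_pos n)"
proof -
  have "ins_pos n \<subseteq> {0..n} \<times> {0..n}" unfolding ins_pos_def by auto
  then show ?thesis using finite_subset by blast
qed

definition ins_sign :: "nat \<Rightarrow> nat \<Rightarrow> nat \<Rightarrow> int list \<Rightarrow> int" where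
  "ins_sign n r s ds = int r + int s * int (n - r - s) + (2 - int s) * sum_list (take r ds)"

lemma insert_sum_eq: "insert_sum sc Ou In n ds xs =
  (\<Sum>rs\<in>ins_pos n. sc (psign (ins_sign n (fst rs) (snd rs) ds))
     (Ou (n - snd rs + 1) (ins_degs (fst rs) (snd rs) ds) (ins_elems In (fst rs) (snd rs) ds xs)))"
  unfolding insert_sum_def ins_pos_def ins_sign_def ins_degs_def ins_elems_def Let_def
  by (rule sum.cong) (auto simp: case_prod_beta)

lemma length_ins_degs: "r + s \<le> length ds \<Longrightarrow> length (ins_degs r s ds) = length ds - s + 1"
  unfolding ins_degs_def by simp
lemma take_insert_block: "r + s \<le> k \<Longrightarrow> k \<le> length ys
    \<Longrightarrow> take (k - s + 1) (take r ys @ [e] @ drop (r + s) ys)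
    = take r (take k ys) @ [e] @ drop (r + s) (take k ys)"
proof -
  assume a: "r + s \<le> k" "k \<le> length ys"
  have e1: "k - s + 1 - r = Suc (k - r - s)" using a by simp
  have "take (k - s + 1) (take r ys @ [e] @ drop (r + s) ys)
      = take r ys @ take (k - s + 1 - r) (e # drop (r + s) ys)"
    using a by (simp add: take_append min_def)
  also have "\<dots> = take r ys @ e # take (k - r - s) (drop (r + s) ys)" unfolding e1 by simp
  also have "take (k - r - s) (drop (r + s) ys) = drop (r + s) (take k ys)"
      by (simp add: drop_take diff_diff_left)
  finally have f: "take (k - s + 1) (take r ys @ [e] @ drop (r + s) ys)
      = take r ys @ e # drop (r + s) (take k ys)" .
  have "take r (take k ys) = take r ys" using a by (simp add: min_def)
  then show ?thesis using f by (simp only: append_Cons append_Nil)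
qed

lemma drop_insert_block: "r + s \<le> k \<Longrightarrow> k \<le> length ys
    \<Longrightarrow> drop (k - s + 1) (take r ys @ [e] @ drop (r + s) ys) = drop k ys"
proof -
  assume a: "r + s \<le> k" "k \<le> length ys"
  have e1: "k - s + 1 - r = Suc (k - r - s)" using a by simp
  have "drop (k - s + 1) (take r ys @ [e] @ drop (r + s) ys)
      = drop (k - s + 1 - r) (e # drop (r + s) ys)"
    using a by (simp add: drop_append min_def)
  also have "\<dots> = drop (k - r - s) (drop (r + s) ys)" unfolding e1 by simp
  also have "\<dots> = drop k ys" using a by simp
  finally show ?thesis .
qed

lemma sum_list_split3:
    "sum_list (ds::int list)
    = sum_list (take r ds) + sum_list (take s (drop r ds)) + sum_list (drop (r + s) ds)"
proof -
  have "ds = take r ds @ take s (drop r ds) @ drop s (drop r ds)"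
      by (simp only: append_take_drop_id)
  then have "sum_list ds = sum_list (take r ds @ take s (drop r ds) @ drop s (drop r ds))" by simp
  also have "\<dots> = sum_list (take r ds) + sum_list (take s (drop r ds)) + sum_list (drop (r + s) ds)"
    by (simp add: add.commute add.assoc)
  finally show ?thesis .
qed

lemma sum_list_ins_degs: "r + s \<le> length ds \<Longrightarrow> sum_list (ins_degs r s ds) = sum_list ds + 2 - int s"
  unfolding ins_degs_def using sum_list_split3[of ds r s] by simp

lemma ins_degs_take: "r + s \<le> k \<Longrightarrow> k \<le> length ds
    \<Longrightarrow> ins_degs r s (take k ds) = take (k - s + 1) (ins_degs r s ds)"
proof -
  assume a: "r + s \<le> k" "k \<le> length ds"
  have "take s (drop r (take k ds)) = take s (drop r ds)" using a by (simp add: drop_take min_def)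
  then show ?thesis unfolding ins_degs_def using take_insert_block[OF a] by simp
qed

lemma ins_elems_take: "r + s \<le> k \<Longrightarrow> k \<le> length xs
    \<Longrightarrow> ins_elems G r s (take k ds) (take k xs) = take (k - s + 1) (ins_elems G r s ds xs)"
proof -
  assume a: "r + s \<le> k" "k \<le> length xs"
  have "take s (drop r (take k ds)) = take s (drop r ds)" using a by (simp add: drop_take min_def)
  moreover have "take s (drop r (take k xs)) = take s (drop r xs)" using a
      by (simp add: drop_take min_def)
  ultimately show ?thesis unfolding ins_elems_def using take_insert_block[OF a] by simp
qed

lemma ins_degs_drop_take: "r + s \<le> k \<Longrightarrow> k \<le> length ds
    \<Longrightarrow> drop (k - s + 1) (ins_degs r s ds) = drop k ds"
  unfolding ins_degs_def by (rule drop_insert_block)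
lemma ins_elems_drop_take: "r + s \<le> k \<Longrightarrow> k \<le> length xs
    \<Longrightarrow> drop (k - s + 1) (ins_elems G r s ds xs) = drop k xs"
  unfolding ins_elems_def by (rule drop_insert_block)

lemma ins_degs_drop: "k \<le> r \<Longrightarrow> r + s \<le> length ds
    \<Longrightarrow> ins_degs (r - k) s (drop k ds) = drop k (ins_degs r s ds)"
  unfolding ins_degs_def by (simp add: drop_take add.commute)
lemma ins_elems_drop: "k \<le> r \<Longrightarrow> r + s \<le> length ds \<Longrightarrow> length xs = length ds
    \<Longrightarrow> ins_elems G (r - k) s (drop k ds) (drop k xs) = drop k (ins_elems G r s ds xs)"
  unfolding ins_elems_def by (simp add: drop_take add.commute)
lemma ins_degs_take2: "k \<le> r \<Longrightarrow> r \<le> length ds \<Longrightarrow> take k (ins_degs r s ds) = take k ds"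
  unfolding ins_degs_def by (simp add: min_def)
lemma ins_elems_take2: "k \<le> r \<Longrightarrow> length xs = length ds \<Longrightarrow> r \<le> length ds
    \<Longrightarrow> take k (ins_elems G r s ds xs) = take k xs"
  unfolding ins_elems_def by (simp add: min_def)

lemma sum_take_add: "sum_list (take (k + j) (ds::int list))
    = sum_list (take k ds) + sum_list (take j (drop k ds))"
  by (simp add: take_add)
lemma sum_take_drop: "sum_list (ds::int list) = sum_list (take k ds) + sum_list (drop k ds)"
  by (metis append_take_drop_id sum_list_append)

lemma lam_term_degree:
  "k \<le> length ds \<Longrightarrow> sum_list (take k ds) + 1 - int k + (sum_list (drop k ds) + 1 - int (length ds - k))
     = sum_list ds + 2 - int (length ds)"
  using sum_take_drop[of ds k] by (simp add: of_nat_diff)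

lemma sign_ins_left:
  fixes n k r s :: nat and X a :: int
  assumes "r + s \<le> k" "k < n" "1 \<le> s"
  shows "(psign (int k - 1 + (1 - int (n - k)) * X) * psign (int r + int s * int (k - r - s) + (2 - int s) * a) :: 'k::field)
       = - (psign (int r + int s * int (n - r - s) + (2 - int s) * a) *
            psign (int (k - s + 1) - 1 + (1 - int (n - s + 1 - (k - s + 1))) * (X + 2 - int s)))"
proof -
  have e1: "int (n - k) = int n - int k" "int (k - r - s) = int k - int r - int s"
      "int (n - r - s) = int n - int r - int s"
    "int (k - s + 1) = int k - int s + 1" "int (n - s + 1 - (k - s + 1)) = int n - int k"
      using assms by auto
  let ?L = "int k - 1 + (1 - (int n - int k)) * X + (int r + int s * (int k - int r - int s) + (2 - int s) * a)"
  let ?R = "int r + int s * (int n - int r - int s) + (2 - int s) * a + (int k - int s + 1 - 1 + (1 - (int n - int k)) * (X + 2 - int s))"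
  have "?L - ?R = 2 * (int s - 2 + (int n - int k) - int s * (int n - int k)) + 1"
    by (simp add: algebra_simps)
  then have "odd (?L - ?R)" by presburger
  then have "psign ?L = - (psign ?R :: 'k)" by (rule psign_anti)
  then show ?thesis unfolding e1 psign_add[symmetric] by simp
qed

lemma sign_ins_right:
  fixes n k r s :: nat and x a :: int
  assumes "k < n" "r + s \<le> n - k" "1 \<le> s"
  shows "(psign (int k - 1 + (1 - int (n - k)) * x) * psign (x + 1 - int k) * psign (int r + int s * int (n - k - r - s) + (2 - int s) * a) :: 'k::field)
       = - (psign (int (k + r) + int s * int (n - (k + r) - s) + (2 - int s) * (x + a)) *
            psign (int k - 1 + (1 - int (n - s + 1 - k)) * x))"
proof -
  have e1: "int (n - k) = int n - int k" "int (n - k - r - s) = int n - int k - int r - int s"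
    "int (n - (k + r) - s) = int n - int k - int r - int s"
      "int (n - s + 1 - k) = int n - int s + 1 - int k"
    "int (k + r) = int k + int r" using assms by auto
  let ?L = "int k - 1 + (1 - (int n - int k)) * x + (x + 1 - int k) + (int r + int s * (int n - int k - int r - int s) + (2 - int s) * a)"
  let ?R = "int k + int r + int s * (int n - int k - int r - int s) + (2 - int s) * (x + a) + (int k - 1 + (1 - (int n - int s + 1 - int k)) * x)"
  have "?L - ?R = 2 * (- int k) + 1"
    by (simp add: algebra_simps)
  then have "odd (?L - ?R)" by presburger
  then have "psign ?L = - (psign ?R :: 'k)" by (rule psign_anti)
  then show ?thesis unfolding e1 psign_add[symmetric] by (simp add: add.assoc)
qed

lemma sign_assoc:
  fixes n k j :: nat and x y :: int
  assumes "k + j < n"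
  shows "(psign (int (k + j) - 1 + (1 - int (n - (k + j))) * (x + y)) * psign (int k - 1 + (1 - int (k + j - k)) * x) :: 'k::field)
       = - (psign (int k - 1 + (1 - int (n - k)) * x) * psign (x + 1 - int k) * psign (int j - 1 + (1 - int (n - k - j)) * y))"
proof -
  have e1: "int (n - (k + j)) = int n - int k - int j" "int (k + j - k) = int j"
      "int (n - k) = int n - int k"
    "int (n - k - j) = int n - int k - int j" "int (k + j) = int k + int j" using assms by auto
  let ?L = "int k + int j - 1 + (1 - (int n - int k - int j)) * (x + y) + (int k - 1 + (1 - int j) * x)"
  let ?R = "int k - 1 + (1 - (int n - int k)) * x + (x + 1 - int k) + (int j - 1 + (1 - (int n - int k - int j)) * y)"
  have "?L - ?R = 2 * int k - 1"
    by (simp add: algebra_simps)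
  then have "odd (?L - ?R)" by presburger
  then have "psign ?L = - (psign ?R :: 'k)" by (rule psign_anti)
  then show ?thesis unfolding e1 psign_add[symmetric] by (simp add: add.assoc)
qed

text \<open>Keller's sign k - 1 for mu (f_k, f_(n-k)), plus the Koszul sign of moving f_(n-k), of
  degree 1 - (n - k), past the first k arguments.\<close>

definition lam_sign :: "nat \<Rightarrow> nat \<Rightarrow> int list \<Rightarrow> int" where
  "lam_sign n k ds = int k - 1 + (1 - int (n - k)) * sum_list (take k ds)"

lemma length_le_sum_list: "0 \<notin> set cs \<Longrightarrow> length cs \<le> sum_list (cs :: nat list)"
  by (induction cs) auto

lemma compositions_finite: "finite (compositions n)"
proof -
  have "compositions n \<subseteq> {cs. set cs \<subseteq> {0..n} \<and> length cs \<le> n}"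
  proof
    fix cs assume "cs \<in> compositions n"
    then have cs: "sum_list cs = n" "0 \<notin> set cs" unfolding compositions_def by auto
    have "set cs \<subseteq> {0..n}" using cs(1) member_le_sum_list by fastforce
    moreover have "length cs \<le> n" using length_le_sum_list[OF cs(2)] cs(1) by simp
    ultimately show "cs \<in> {cs. set cs \<subseteq> {0..n} \<and> length cs \<le> n}" by blast
  qed
  moreover have "finite {cs. set cs \<subseteq> {0..n} \<and> length cs \<le> n}"
    by (rule finite_lists_length_le) simp
  ultimately show ?thesis using finite_subset by blast
qed

lemma compositions_length_le_2:
  assumes "cs \<in> compositions n" "length cs \<le> 2" "1 \<le> n"
  shows "cs = [n] \<or> (\<exists>k\<in>{1..<n}. cs = [k, n - k])"
proof -
  have cs: "sum_list cs = n" "0 \<notin> set cs" using assms(1) unfolding compositions_def by auto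
  show ?thesis
  proof (cases cs)
    case Nil
    then show ?thesis using cs assms(3) by simp
  next
    case (Cons a t)
    show ?thesis
    proof (cases t)
      case Nil
      then show ?thesis using Cons cs by simp
    next
      case (Cons b t')
      then have "cs = [a, b]" using assms(2) \<open>cs = a # t\<close> by simp
      then show ?thesis using cs by (intro disjI2 bexI[of _ a]) auto
    qed
  qed
qed

lemma keller_exp_single: "keller_exp [n] = 0" unfolding keller_exp_def by simp
lemma keller_exp_pair: "keller_exp [k, l] = int k - 1" unfolding keller_exp_def
    by (simp add: numeral_2_eq_2)

section \<open>Homotopy transfer\<close>

locale homotopy_transfer = vector_space sc for sc :: "'k::field \<Rightarrow> 'a::ab_group_add \<Rightarrow> 'a" +
  fixes A :: "int \<Rightarrow> 'a set" and d :: "int \<Rightarrow> 'a \<Rightarrow> 'a"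
    and mu :: "int \<Rightarrow> int \<Rightarrow> 'a \<Rightarrow> 'a \<Rightarrow> 'a"
    and M :: "int \<Rightarrow> 'a set" and P :: "int \<Rightarrow> 'a \<Rightarrow> 'a" and h :: "int \<Rightarrow> 'a \<Rightarrow> 'a"
  assumes dga: "dg_algebra sc A d mu"
    and M_subspace: "subspace (M n)" and M_A: "M n \<subseteq> A n" and d_M: "x \<in> M n \<Longrightarrow> d n x \<in> M (n + 1)"
    and P_linear: "linear_on sc sc (A n) (P n)" and P_M: "x \<in> A n \<Longrightarrow> P n x \<in> M n"
    and P_d_commute: "x \<in> A n \<Longrightarrow> P (n + 1) (d n x) = d n (P n x)"
    and h_linear: "linear_on sc sc (A n) (h n)" and h_A: "x \<in> A n \<Longrightarrow> h n x \<in> A (n - 1)"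
    and P_homotopy: "x \<in> A n \<Longrightarrow> P n x - x = d (n - 1) (h n x) + h (n + 1) (d n x)"
begin

lemma A_subspace: "subspace (A n)" using dga unfolding dg_algebra_def graded_space_def by simp
lemma d_linear: "linear_on sc sc (A n) (d n)" using dga unfolding dg_algebra_def by simp
lemma d_A: "x \<in> A n \<Longrightarrow> d n x \<in> A (n + 1)" using dga unfolding dg_algebra_def by simp
lemma mu_A: "x \<in> A n \<Longrightarrow> y \<in> A m \<Longrightarrow> mu n m x y \<in> A (n + m)" using dga unfolding dg_algebra_def by simp
lemma mu_linear_left: "y \<in> A m
    \<Longrightarrow> linear_on sc sc (A n) (\<lambda>x. mu n m x y)" using dga unfolding dg_algebra_def by simp
lemma mu_linear_right: "x \<in> A n
    \<Longrightarrow> linear_on sc sc (A m) (\<lambda>y. mu n m x y)" using dga unfolding dg_algebra_def by simp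
lemma d_d: "x \<in> A n \<Longrightarrow> d (n + 1) (d n x) = 0" using dga unfolding dg_algebra_def by simp
lemma d_0 [simp]: "d n 0 = 0" using linear_on_0[OF d_linear A_subspace] .
lemma h_0 [simp]: "h n 0 = 0" using linear_on_0[OF h_linear A_subspace] .
lemma P_0 [simp]: "P n 0 = 0" using linear_on_0[OF P_linear A_subspace] .
lemma leibniz: "x \<in> A n \<Longrightarrow> y \<in> A m \<Longrightarrow>
    d (n + m) (mu n m x y) = mu (n + 1) m (d n x) y + sc (psign n) (mu n (m + 1) x (d m y))"
  using dga unfolding dg_algebra_def by simp
lemma mu_assoc: "x \<in> A n \<Longrightarrow> y \<in> A m \<Longrightarrow> z \<in> A k \<Longrightarrow>
    mu (n + m) k (mu n m x y) z = mu n (m + k) x (mu m k y z)"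
  using dga unfolding dg_algebra_def by simp

function f_tr :: "nat \<Rightarrow> int list \<Rightarrow> 'a list \<Rightarrow> 'a" where
  "f_tr n ds xs = (if n \<le> 1 then hd xs else
     h (sum_list ds + 2 - int n)
       (\<Sum>k\<in>{1..<n}. sc (psign (lam_sign n k ds))
          (mu (sum_list (take k ds) + 1 - int k) (sum_list (drop k ds) + 1 - int (n - k))
             (f_tr k (take k ds) (take k xs)) (f_tr (n - k) (drop k ds) (drop k xs)))))"
  by pat_completeness auto
termination by (relation "measure (\<lambda>(n, ds, xs). n)") auto

declare f_tr.simps[simp del]

definition lam :: "nat \<Rightarrow> int list \<Rightarrow> 'a list \<Rightarrow> 'a" where
  "lam n ds xs = (\<Sum>k\<in>{1..<n}. sc (psign (lam_sign n k ds))
          (mu (sum_list (take k ds) + 1 - int k) (sum_list (drop k ds) + 1 - int (n - k))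
             (f_tr k (take k ds) (take k xs)) (f_tr (n - k) (drop k ds) (drop k xs))))"

definition lam_term :: "nat \<Rightarrow> int list \<Rightarrow> 'a list \<Rightarrow> 'a" where
  "lam_term k ds xs = mu (sum_list (take k ds) + 1 - int k) (sum_list (drop k ds) + 1 - int (length ds - k))
     (f_tr k (take k ds) (take k xs)) (f_tr (length ds - k) (drop k ds) (drop k xs))"

lemma lam_eq_sum_lam_term: "length ds = n
    \<Longrightarrow> lam n ds xs = (\<Sum>k\<in>{1..<n}. sc (psign (lam_sign n k ds)) (lam_term k ds xs))"
  unfolding lam_def lam_term_def by simp

lemma f_tr_1: "n \<le> 1 \<Longrightarrow> f_tr n ds xs = hd xs" by (simp add: f_tr.simps)
lemma f_tr_ge2: "2 \<le> n \<Longrightarrow> f_tr n ds xs = h (sum_list ds + 2 - int n) (lam n ds xs)"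
  by (simp add: f_tr.simps lam_def)
lemma lam_le1: "n \<le> 1 \<Longrightarrow> lam n ds xs = 0" by (simp add: lam_def)

definition nu_tr :: "nat \<Rightarrow> int list \<Rightarrow> 'a list \<Rightarrow> 'a" where
  "nu_tr n ds xs = P (sum_list ds + 2 - int n) (lam n ds xs)"

abbreviation m_tr where "m_tr \<equiv> ainf_ops d nu_tr"

lemma f_tr_lam_A:
  assumes "homog M ds xs" "length ds = n" "1 \<le> n"
  shows "f_tr n ds xs \<in> A (sum_list ds + 1 - int n) \<and> lam n ds xs \<in> A (sum_list ds + 2 - int n)"
  using assms
proof (induction n arbitrary: ds xs rule: less_induct)
  case (less n)
  have "lam_term k ds xs \<in> A (sum_list ds + 2 - int n)" if k: "k \<in> {1..<n}" for k
  proof -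
    have f1: "f_tr k (take k ds) (take k xs) \<in> A (sum_list (take k ds) + 1 - int k)"
      using less.IH[of k "take k ds" "take k xs"] homog_take[OF less.prems(1)] k less.prems(2)
        by auto
    have f2: "f_tr (n - k) (drop k ds) (drop k xs) \<in> A (sum_list (drop k ds) + 1 - int (n - k))"
      using less.IH[of "n - k" "drop k ds" "drop k xs"] homog_drop[OF less.prems(1)] k less.prems(2)
        by auto
    have "sum_list (take k ds) + 1 - int k + (sum_list (drop k ds) + 1 - int (n - k))
      = sum_list ds + 2 - int n"
      using lam_term_degree[of k ds] k less.prems(2) by simp
    then show ?thesis unfolding lam_term_def less.prems(2) by (metis mu_A[OF f1 f2])
  qed
  then have lamA: "lam n ds xs \<in> A (sum_list ds + 2 - int n)"
    unfolding lam_eq_sum_lam_term[OF less.prems(2)]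
    by (intro subspace_sum[OF A_subspace] subspace_scale[OF A_subspace])
  show ?case
  proof (cases "n = 1")
    case True
    then obtain e x where "ds = [e]" "xs = [x]"
      using less.prems(2) homog_length[OF less.prems(1)]
        by (metis One_nat_def length_0_conv length_Suc_conv)
    then show ?thesis using True homog_hd[OF less.prems(1)] M_A lamA f_tr_1 by auto
  next
    case False
    then show ?thesis using less.prems(3) f_tr_ge2 h_A[OF lamA] lamA by (simp add: algebra_simps)
  qed
qed

lemma f_tr_A: "homog M ds xs \<Longrightarrow> length ds = n \<Longrightarrow> 1 \<le> n \<Longrightarrow> f_tr n ds xs \<in> A (sum_list ds + 1 - int n)"
  using f_tr_lam_A by blast
lemma lam_A: "homog M ds xs \<Longrightarrow> length ds = n \<Longrightarrow> lam n ds xs \<in> A (sum_list ds + 2 - int n)"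
  using f_tr_lam_A[of ds xs n] lam_le1[of n ds xs] subspace_0[OF A_subspace] by (cases "1 \<le> n") auto
lemma nu_tr_M: "homog M ds xs \<Longrightarrow> length ds = n \<Longrightarrow> nu_tr n ds xs \<in> M (sum_list ds + 2 - int n)"
  unfolding nu_tr_def using P_M lam_A by blast
lemma m_tr_M:
  assumes "homog M ds xs" "length ds = n" "1 \<le> n"
  shows "m_tr n ds xs \<in> M (sum_list ds + 2 - int n)"
proof (cases "n = 1")
  case True
  have "d (hd ds) (hd xs) \<in> M (hd ds + 1)" using d_M homog_hd[OF assms(1)] assms(2) True by simp
  moreover have "sum_list ds = hd ds" using sum_list_one assms(2) True by simp
  ultimately show ?thesis using True unfolding ainf_ops_def by (simp add: add.commute)
next
  case False
  then show ?thesis using nu_tr_M assms unfolding ainf_ops_def by simp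
qed

lemma lam_term_A:
  assumes "homog M ds xs" "length ds = n" "k \<in> {1..<n}"
  shows "lam_term k ds xs \<in> A (sum_list ds + 2 - int n)"
proof -
  have f1: "f_tr k (take k ds) (take k xs) \<in> A (sum_list (take k ds) + 1 - int k)"
    by (rule f_tr_A[OF homog_take[OF assms(1)]]) (use assms in auto)
  have f2: "f_tr (n - k) (drop k ds) (drop k xs) \<in> A (sum_list (drop k ds) + 1 - int (n - k))"
    by (rule f_tr_A[OF homog_drop[OF assms(1)]]) (use assms in auto)
  have "sum_list (take k ds) + 1 - int k + (sum_list (drop k ds) + 1 - int (n - k)) = sum_list ds + 2 - int n"
    using lam_term_degree[of k ds] assms(2,3) by simp
  then show ?thesis unfolding lam_term_def assms(2) by (metis mu_A[OF f1 f2])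
qed

lemma homog_ins:
  assumes "homog M es ys" "length es = m" "(r, s) \<in> ins_pos m"
  shows "homog M (ins_degs r s es) (ins_elems m_tr r s es ys)"
proof -
  have a: "1 \<le> s" "r + s \<le> m" using assms(3) unfolding ins_pos_def by auto
  have h1: "homog M (take r es) (take r ys)" using homog_take[OF assms(1)] .
  have h2: "homog M (drop (r + s) es) (drop (r + s) ys)" using homog_drop[OF assms(1)] .
  have h3: "homog M (take s (drop r es)) (take s (drop r ys))"
      using homog_take[OF homog_drop[OF assms(1)]] .
  have l3: "length (take s (drop r es)) = s" using a assms(2) by simp
  have "m_tr s (take s (drop r es)) (take s (drop r ys)) \<in> M (sum_list (take s (drop r es)) + 2 - int s)"
    by (rule m_tr_M[OF h3 l3 a(1)])
  then have "homog M [sum_list (take s (drop r es)) + 2 - int s] [m_tr s (take s (drop r es)) (take s (drop r ys))]"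
    by (rule homog_single)
  then show ?thesis unfolding ins_degs_def ins_elems_def
    using homog_append[OF h1 homog_append[OF _ h2]] by blast
qed

lemma f_tr_ins_A:
  assumes "homog M es ys" "length es = m" "rs \<in> ins_pos m"
  shows "f_tr (m - snd rs + 1) (ins_degs (fst rs) (snd rs) es) (ins_elems m_tr (fst rs) (snd rs) es ys)
    \<in> A (sum_list es + 2 - int m)"
proof -
  obtain r s where rs: "rs = (r, s)" "1 \<le> s" "r + s \<le> m" using assms(3) unfolding ins_pos_def
      by auto
  have deg: "sum_list (ins_degs r s es) + 1 - int (m - s + 1) = sum_list es + 2 - int m"
    using sum_list_ins_degs[of r s es] rs assms(2) by (simp add: of_nat_diff)
  have "f_tr (m - s + 1) (ins_degs r s es) (ins_elems m_tr r s es ys)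
      \<in> A (sum_list (ins_degs r s es) + 1 - int (m - s + 1))"
    by (rule f_tr_A[OF homog_ins[OF assms(1,2)]]) (use assms(2,3) rs length_ins_degs in auto)
  then show ?thesis unfolding deg rs(1) fst_conv snd_conv .
qed

lemma insert_sum_f_tr_A:
  assumes "homog M es ys" "length es = m"
  shows "insert_sum sc f_tr m_tr m es ys \<in> A (sum_list es + 2 - int m)"
  unfolding insert_sum_eq
  by (intro subspace_sum[OF A_subspace] subspace_scale[OF A_subspace] f_tr_ins_A[OF assms])

text \<open>
  Expanding d lam_n by the Leibniz rule and the relations d f_k = insert_sum f_k - lam_k for k < n
  gives four families of terms t_ins_left, t_lam_left, t_ins_right, t_lam_right. The two families
  containing lam cancel by associativity of mu, and the two containing insert_sum reassemble, with
  the opposite sign, the two halves of insert_sum lam_n, split by whether the inserted block lies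
  in the left or the right factor of lam_n.
\<close>

context
  fixes n :: nat and ds :: "int list" and xs :: "'a list"
  assumes hom: "homog M ds xs" and len: "length ds = n"
begin

lemma length_xs: "length xs = n" using hom len homog_length by metis

definition t_ins_left :: "nat \<Rightarrow> 'a" where
  "t_ins_left k = sc (psign (lam_sign n k ds))
      (mu (sum_list (take k ds) + 2 - int k) (sum_list (drop k ds) + 1 - int (n - k))
      (insert_sum sc f_tr m_tr k (take k ds) (take k xs)) (f_tr (n - k) (drop k ds) (drop k xs)))"

definition t_lam_left :: "nat \<Rightarrow> 'a" where
  "t_lam_left k = sc (psign (lam_sign n k ds))
      (mu (sum_list (take k ds) + 2 - int k) (sum_list (drop k ds) + 1 - int (n - k))
      (lam k (take k ds) (take k xs)) (f_tr (n - k) (drop k ds) (drop k xs)))"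

definition t_ins_right :: "nat \<Rightarrow> 'a" where
  "t_ins_right k = sc (psign (lam_sign n k ds)) (sc (psign (sum_list (take k ds) + 1 - int k))
      (mu (sum_list (take k ds) + 1 - int k) (sum_list (drop k ds) + 2 - int (n - k))
      (f_tr k (take k ds) (take k xs)) (insert_sum sc f_tr m_tr (n - k) (drop k ds) (drop k xs))))"

definition t_lam_right :: "nat \<Rightarrow> 'a" where
  "t_lam_right k = sc (psign (lam_sign n k ds)) (sc (psign (sum_list (take k ds) + 1 - int k))
      (mu (sum_list (take k ds) + 1 - int k) (sum_list (drop k ds) + 2 - int (n - k))
      (f_tr k (take k ds) (take k xs)) (lam (n - k) (drop k ds) (drop k xs))))"

lemma d_lam_term:
  assumes IH: "\<And>k es ys. 1 \<le> k \<Longrightarrow> k < n \<Longrightarrow> length es = k \<Longrightarrow> homog M es ys \<Longrightarrow>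
      d (sum_list es + 1 - int k) (f_tr k es ys) = insert_sum sc f_tr m_tr k es ys - lam k es ys"
    and k: "k \<in> {1..<n}"
  shows "sc (psign (lam_sign n k ds)) (d (sum_list ds + 2 - int n) (lam_term k ds xs)) =
    t_ins_left k - t_lam_left k + t_ins_right k - t_lam_right k"
proof -
  let ?x = "f_tr k (take k ds) (take k xs)" and ?y = "f_tr (n - k) (drop k ds) (drop k xs)"
  let ?al = "sum_list (take k ds) + 1 - int k" and ?be = "sum_list (drop k ds) + 1 - int (n - k)"
  let ?IX = "insert_sum sc f_tr m_tr k (take k ds) (take k xs)" and ?LX =
      "lam k (take k ds) (take k xs)"
  let ?IY = "insert_sum sc f_tr m_tr (n - k) (drop k ds) (drop k xs)" and ?LY =
      "lam (n - k) (drop k ds) (drop k xs)"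
  have lx: "length (take k ds) = k" "1 \<le> k" "k < n" and ly: "length (drop k ds) = n - k" "1 \<le> n - k"
      "n - k < n"
    using k len by auto
  have hx: "homog M (take k ds) (take k xs)" and hy: "homog M (drop k ds) (drop k xs)"
    using homog_take[OF hom] homog_drop[OF hom] .
  have xA: "?x \<in> A ?al" and yA: "?y \<in> A ?be" using f_tr_A[OF hx lx(1,2)] f_tr_A[OF hy ly(1,2)] .
  have dx: "d ?al ?x = ?IX - ?LX" and dy: "d ?be ?y = ?IY - ?LY"
    using IH[OF lx(2,3,1) hx] IH[OF ly(2,3,1) hy] .
  have e: "?al + 1 = sum_list (take k ds) + 2 - int k"
      "?be + 1 = sum_list (drop k ds) + 2 - int (n - k)" by simp_all
  have deg: "sum_list ds + 2 - int n = ?al + ?be" using lam_term_degree[of k ds] k len by simp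
  have "d (sum_list ds + 2 - int n) (lam_term k ds xs) = d (?al + ?be) (mu ?al ?be ?x ?y)"
    unfolding deg lam_term_def len ..
  also have "\<dots> = mu (?al + 1) ?be (d ?al ?x) ?y + sc (psign ?al) (mu ?al (?be + 1) ?x (d ?be ?y))"
    by (rule leibniz[OF xA yA])
  also have "mu (?al + 1) ?be (d ?al ?x) ?y = mu (?al + 1) ?be ?IX ?y - mu (?al + 1) ?be ?LX ?y"
    unfolding dx by (rule linear_on_diff[OF mu_linear_left[OF yA] A_subspace])
      (fact insert_sum_f_tr_A[OF hx lx(1), folded e(1)] lam_A[OF hx lx(1), folded e(1)])+
  also have "mu ?al (?be + 1) ?x (d ?be ?y) = mu ?al (?be + 1) ?x ?IY - mu ?al (?be + 1) ?x ?LY"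
    unfolding dy by (rule linear_on_diff[OF mu_linear_right[OF xA] A_subspace])
      (fact insert_sum_f_tr_A[OF hy ly(1), folded e(2)] lam_A[OF hy ly(1), folded e(2)])+
  finally show ?thesis
    unfolding t_ins_left_def t_lam_left_def t_ins_right_def t_lam_right_def e
    by (simp only: scale_right_diff_distrib scale_right_distrib add_diff_eq)
qed

definition g_ins_left :: "nat \<times> (nat \<times> nat) \<Rightarrow> 'a" where
  "g_ins_left p = (case p of (k, (r, s)) \<Rightarrow> sc (psign
      (lam_sign n k ds) * psign (ins_sign k r s (take k ds)))
      (lam_term (k - s + 1) (ins_degs r s ds) (ins_elems m_tr r s ds xs)))"

definition g_ins_right :: "nat \<times> (nat \<times> nat) \<Rightarrow> 'a" where
  "g_ins_right p = (case p of (k, (r, s)) \<Rightarrow>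
      sc (psign (lam_sign n k ds) * psign (sum_list (take k ds) + 1 - int k) * psign (ins_sign (n - k) r s (drop k ds)))
      (lam_term k (ins_degs (k + r) s ds) (ins_elems m_tr (k + r) s ds xs)))"

definition g_lam_ins :: "(nat \<times> nat) \<times> nat \<Rightarrow> 'a" where
  "g_lam_ins p = (case p of ((r, s), k') \<Rightarrow> sc (psign (ins_sign n r s ds) * psign
      (lam_sign (n - s + 1) k' (ins_degs r s ds)))
      (lam_term k' (ins_degs r s ds) (ins_elems m_tr r s ds xs)))"

definition g_lam_left :: "nat \<times> nat \<Rightarrow> 'a" where
  "g_lam_left p = (case p of (K, J) \<Rightarrow> sc (psign (lam_sign n K ds) * psign
      (lam_sign K J (take K ds)))
     (mu (sum_list (take K ds) + 2 - int K) (sum_list (drop K ds) + 1 - int (n - K))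
       (lam_term J (take K ds) (take K xs)) (f_tr (n - K) (drop K ds) (drop K xs))))"

definition g_lam_right :: "nat \<times> nat \<Rightarrow> 'a" where
  "g_lam_right p = (case p of (k, j) \<Rightarrow>
     sc (psign (lam_sign n k ds) * psign (sum_list (take k ds) + 1 - int k) * psign
       (lam_sign (n - k) j (drop k ds)))
     (mu (sum_list (take k ds) + 1 - int k) (sum_list (drop k ds) + 2 - int (n - k))
       (f_tr k (take k ds) (take k xs)) (lam_term j (drop k ds) (drop k xs))))"

definition lam_ins_left_idx where
  "lam_ins_left_idx = {p \<in> Sigma (ins_pos n) (\<lambda>rs. {1..<n - snd rs + 1}). fst (fst p) < snd p}"

definition lam_ins_right_idx where
  "lam_ins_right_idx = {p \<in> Sigma (ins_pos n) (\<lambda>rs. {1..<n - snd rs + 1}). snd p \<le> fst (fst p)}"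

lemma lam_term_ins_left:
  assumes k: "k \<in> {1..<n}" and rs: "(r, s) \<in> ins_pos k"
  shows "mu (sum_list (take k ds) + 2 - int k) (sum_list (drop k ds) + 1 - int (n - k))
      (f_tr (k - s + 1) (ins_degs r s (take k ds)) (ins_elems m_tr r s (take k ds) (take k xs)))
        (f_tr (n - k) (drop k ds) (drop k xs))
    = lam_term (k - s + 1) (ins_degs r s ds) (ins_elems m_tr r s ds xs)"
proof -
  have a: "1 \<le> k" "k < n" "1 \<le> s" "r + s \<le> k" using k rs unfolding ins_pos_def by auto
  have t1: "take (k - s + 1) (ins_degs r s ds) = ins_degs r s (take k ds)"
    using ins_degs_take[of r s k ds] a len by simp
  have t2: "take (k - s + 1) (ins_elems m_tr r s ds xs)
      = ins_elems m_tr r s (take k ds) (take k xs)"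
    using ins_elems_take[of r s k xs m_tr ds] a length_xs by simp
  have t3: "drop (k - s + 1) (ins_degs r s ds) = drop k ds" using ins_degs_drop_take a len by simp
  have t4: "drop (k - s + 1) (ins_elems m_tr r s ds xs) = drop k xs"
      using ins_elems_drop_take[of r s k xs m_tr ds] a length_xs by simp
  have l: "length (ins_degs r s ds) - (k - s + 1) = n - k" using length_ins_degs[of r s ds] a len
      by simp
  have s1: "sum_list (ins_degs r s (take k ds)) = sum_list (take k ds) + 2 - int s"
    using sum_list_ins_degs[of r s "take k ds"] a len by simp
  have deg1: "sum_list (ins_degs r s (take k ds)) + 1 - int (k - s + 1)
      = sum_list (take k ds) + 2 - int k"
    using s1 a by (simp add: of_nat_diff)
  show ?thesis unfolding lam_term_def t1 t2 t3 t4 l deg1 by simp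
qed

lemma t_ins_left_eq:
  assumes k: "k \<in> {1..<n}"
  shows "t_ins_left k = (\<Sum>rs\<in>ins_pos k. g_ins_left (k, rs))"
proof -
  let ?X = "take k ds" and ?XS = "take k xs" and ?y = "f_tr (n - k) (drop k ds) (drop k xs)"
  let ?da = "sum_list (take k ds) + 2 - int k" and ?db = "sum_list (drop k ds) + 1 - int (n - k)"
  let ?sgn = "\<lambda>rs. psign (ins_sign k (fst rs) (snd rs) ?X)"
  let ?f = "\<lambda>rs. f_tr (k - snd rs + 1) (ins_degs (fst rs) (snd rs) ?X) (ins_elems m_tr (fst rs) (snd rs) ?X ?XS)"
  have hX: "homog M ?X ?XS" using homog_take[OF hom] .
  have lX: "length ?X = k" using k len by simp
  have yA: "?y \<in> A ?db" by (rule f_tr_A[OF homog_drop[OF hom]]) (use k len in auto)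
  have "mu ?da ?db (insert_sum sc f_tr m_tr k ?X ?XS) ?y
      = (\<Sum>rs\<in>ins_pos k. sc (?sgn rs) (mu ?da ?db (?f rs) ?y))"
    unfolding insert_sum_eq
    by (rule linear_on_sum_scale[OF mu_linear_left[OF yA] A_subspace]) (use f_tr_ins_A[OF hX lX] in simp)
  also have "\<dots> = (\<Sum>rs\<in>ins_pos k. sc (?sgn rs)
      (lam_term (k - snd rs + 1) (ins_degs (fst rs) (snd rs) ds) (ins_elems m_tr (fst rs) (snd rs) ds xs)))"
    by (rule sum.cong) (use lam_term_ins_left[OF k] in auto)
  finally show ?thesis
    unfolding t_ins_left_def g_ins_left_def by (simp add: scale_sum_right case_prod_beta)
qed

lemma sum_g_ins_left:
    "(\<Sum>p\<in>Sigma {1..<n} ins_pos. g_ins_left p) = - (\<Sum>p\<in>lam_ins_left_idx. g_lam_ins p)"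
proof -
  have "(\<Sum>p\<in>Sigma {1..<n} ins_pos. g_ins_left p) = (\<Sum>p\<in>lam_ins_left_idx. - g_lam_ins p)"
  proof (rule sum.reindex_bij_witness[where j="\<lambda>(k, (r, s)). ((r, s), k - s + 1)" and i="\<lambda>((r, s), k'). (k' + s - 1, (r, s))"])
    fix a assume "a \<in> Sigma {1..<n} ins_pos"
    then obtain k r s where a: "a = (k, (r, s))" "1 \<le> k" "k < n" "1 \<le> s" "r + s \<le> k"
      unfolding ins_pos_def by auto
    show "(case case a of (k, r, s) \<Rightarrow> ((r, s), k - s + 1) of (x, xa) \<Rightarrow> (case x of (r, s) \<Rightarrow> \<lambda>k'. (k' + s - 1, r, s)) xa) = a"
      using a by simp
    show "(case a of (k, r, s) \<Rightarrow> ((r, s), k - s + 1)) \<in> lam_ins_left_idx"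
      using a unfolding lam_ins_left_idx_def ins_pos_def by auto
    show "- g_lam_ins (case a of (k, r, s) \<Rightarrow> ((r, s), k - s + 1)) = g_ins_left a"
    proof -
      have rsk: "(r, s) \<in> ins_pos k" using a unfolding ins_pos_def by simp
      have s1: "sum_list (take (k - s + 1) (ins_degs r s ds)) = sum_list (take k ds) + 2 - int s"
        using ins_degs_take[of r s k ds] sum_list_ins_degs[of r s "take k ds"] a len by simp
      have s2: "sum_list (take r (take k ds)) = sum_list (take r ds)" using a by (simp add: min_def)
      have sg: "(psign (lam_sign n k ds) * psign (ins_sign k r s (take k ds)) :: 'k)
         = - (psign (ins_sign n r s ds) * psign
           (lam_sign (n - s + 1) (k - s + 1) (ins_degs r s ds)))"
        unfolding lam_sign_def ins_sign_def s1 s2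
          using sign_ins_left[of r s k n "sum_list (take k ds)" "sum_list (take r ds)"] a by simp
      have g1: "g_ins_left (k, (r, s))
        = sc (psign (lam_sign n k ds) * psign (ins_sign k r s (take k ds)))
        (lam_term (k - s + 1) (ins_degs r s ds) (ins_elems m_tr r s ds xs))"
        unfolding g_ins_left_def by (simp only: prod.case)
      have g2: "g_lam_ins ((r, s), k - s + 1)
        = sc (psign (ins_sign n r s ds) * psign
        (lam_sign (n - s + 1) (k - s + 1) (ins_degs r s ds)))
        (lam_term (k - s + 1) (ins_degs r s ds) (ins_elems m_tr r s ds xs))"
        unfolding g_lam_ins_def by (simp only: prod.case)
      show ?thesis unfolding a(1) prod.case g1 g2 sg scale_minus_left by (rule refl)
    qed
  next
    fix b assume "b \<in> lam_ins_left_idx"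
    then obtain r s k' where b: "b = ((r, s), k')" "1 \<le> s" "r + s \<le> n" "1 \<le> k'" "k' < n - s + 1"
      "r < k'"
      unfolding lam_ins_left_idx_def ins_pos_def by auto
    show "(case case b of (x, xa) \<Rightarrow> (case x of (r, s) \<Rightarrow> \<lambda>k'. (k' + s - 1, r, s)) xa of (k, r, s) \<Rightarrow> ((r, s), k - s + 1)) = b"
      using b by simp
    show "(case b of (x, xa) \<Rightarrow> (case x of (r, s) \<Rightarrow> \<lambda>k'. (k' + s - 1, r, s)) xa) \<in> Sigma {1..<n} ins_pos"
      using b unfolding ins_pos_def by auto
  qed
  also have "\<dots> = - (\<Sum>p\<in>lam_ins_left_idx. g_lam_ins p)" by (simp add: sum_negf)
  finally show ?thesis .
qed

lemma sum_t_ins_left: "(\<Sum>k\<in>{1..<n}. t_ins_left k) = - (\<Sum>p\<in>lam_ins_left_idx. g_lam_ins p)"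
proof -
  have "(\<Sum>k\<in>{1..<n}. t_ins_left k) = (\<Sum>k\<in>{1..<n}. \<Sum>rs\<in>ins_pos k. g_ins_left (k, rs))"
    by (rule sum.cong) (simp_all add: t_ins_left_eq)
  then show ?thesis using sum.Sigma[of "{1..<n}" ins_pos
      "\<lambda>k rs. g_ins_left (k, rs)"] ins_pos_finite sum_g_ins_left by (simp add: case_prod_beta')
qed

lemma insert_sum_lam_eq:
  "insert_sum sc lam m_tr n ds xs = (\<Sum>p\<in>Sigma (ins_pos n) (\<lambda>rs. {1..<n - snd rs + 1}). g_lam_ins p)"
proof -
  have "insert_sum sc lam m_tr n ds xs
      = (\<Sum>rs\<in>ins_pos n. \<Sum>k'\<in>{1..<n - snd rs + 1}. g_lam_ins (rs, k'))"
    unfolding insert_sum_eq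
  proof (rule sum.cong[OF refl])
    fix rs assume "rs \<in> ins_pos n"
    then have l: "length (ins_degs (fst rs) (snd rs) ds) = n - snd rs + 1"
      using length_ins_degs len unfolding ins_pos_def by auto
    show "sc (psign (ins_sign n (fst rs) (snd rs) ds))
        (lam (n - snd rs + 1) (ins_degs (fst rs) (snd rs) ds) (ins_elems m_tr (fst rs) (snd rs) ds xs))
      = (\<Sum>k'\<in>{1..<n - snd rs + 1}. g_lam_ins (rs, k'))"
      unfolding lam_eq_sum_lam_term[OF l] g_lam_ins_def scale_sum_right
      by (rule sum.cong[OF refl]) (simp add: case_prod_beta)
  qed
  also have "\<dots> = (\<Sum>p\<in>Sigma (ins_pos n) (\<lambda>rs. {1..<n - snd rs + 1}). g_lam_ins p)"
    using sum.Sigma[of "ins_pos n" "\<lambda>rs. {1..<n - snd rs + 1}"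
      "\<lambda>rs k'. g_lam_ins (rs, k')"] ins_pos_finite
    by (simp add: case_prod_beta')
  finally show ?thesis .
qed

lemma lam_term_ins_right:
  assumes k: "k \<in> {1..<n}" and rs: "(r, s) \<in> ins_pos (n - k)"
  shows "mu (sum_list (take k ds) + 1 - int k) (sum_list (drop k ds) + 2 - int (n - k))
      (f_tr k (take k ds) (take k xs))
        (f_tr (n - k - s + 1) (ins_degs r s (drop k ds)) (ins_elems m_tr r s (drop k ds) (drop k xs)))
    = lam_term k (ins_degs (k + r) s ds) (ins_elems m_tr (k + r) s ds xs)"
proof -
  have a: "1 \<le> k" "k < n" "1 \<le> s" "r + s \<le> n - k" using k rs unfolding ins_pos_def by auto
  have t1: "take k (ins_degs (k + r) s ds) = take k ds"
      using ins_degs_take2[of k "k + r" ds s] a len by simp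
  have t2: "take k (ins_elems m_tr (k + r) s ds xs) = take k xs"
      using ins_elems_take2[of k "k + r" xs ds m_tr s] a len length_xs by simp
  have t3: "drop k (ins_degs (k + r) s ds) = ins_degs r s (drop k ds)"
      using ins_degs_drop[of k "k + r" s ds] a len by simp
  have t4: "drop k (ins_elems m_tr (k + r) s ds xs) = ins_elems m_tr r s (drop k ds) (drop k xs)"
    using ins_elems_drop[of k "k + r" s ds xs m_tr] a len length_xs by simp
  have l: "length (ins_degs (k + r) s ds) - k = n - k - s + 1"
      using length_ins_degs[of "k + r" s ds] a len by simp
  have s1: "sum_list (ins_degs r s (drop k ds)) = sum_list (drop k ds) + 2 - int s"
    using sum_list_ins_degs[of r s "drop k ds"] a len by simp
  have deg2: "sum_list (ins_degs r s (drop k ds)) + 1 - int (n - k - s + 1)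
      = sum_list (drop k ds) + 2 - int (n - k)"
    using s1 a by (simp add: of_nat_diff)
  show ?thesis unfolding lam_term_def t1 t2 t3 t4 l deg2 by simp
qed

lemma t_ins_right_eq:
  assumes k: "k \<in> {1..<n}"
  shows "t_ins_right k = (\<Sum>rs\<in>ins_pos (n - k). g_ins_right (k, rs))"
proof -
  let ?Y = "drop k ds" and ?YS = "drop k xs" and ?x = "f_tr k (take k ds) (take k xs)"
  let ?da = "sum_list (take k ds) + 1 - int k" and ?db = "sum_list (drop k ds) + 2 - int (n - k)"
  let ?sgn = "\<lambda>rs. psign (ins_sign (n - k) (fst rs) (snd rs) ?Y)"
  let ?f = "\<lambda>rs. f_tr (n - k - snd rs + 1) (ins_degs (fst rs) (snd rs) ?Y) (ins_elems m_tr (fst rs) (snd rs) ?Y ?YS)"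
  have hY: "homog M ?Y ?YS" using homog_drop[OF hom] .
  have lY: "length ?Y = n - k" using k len by simp
  have xA: "?x \<in> A ?da" by (rule f_tr_A[OF homog_take[OF hom]]) (use k len in auto)
  have "mu ?da ?db ?x (insert_sum sc f_tr m_tr (n - k) ?Y ?YS)
      = (\<Sum>rs\<in>ins_pos (n - k). sc (?sgn rs) (mu ?da ?db ?x (?f rs)))"
    unfolding insert_sum_eq
    by (rule linear_on_sum_scale[OF mu_linear_right[OF xA] A_subspace]) (use f_tr_ins_A[OF hY lY] in simp)
  also have "\<dots> = (\<Sum>rs\<in>ins_pos (n - k). sc (?sgn rs)
      (lam_term k (ins_degs (k + fst rs) (snd rs) ds) (ins_elems m_tr (k + fst rs) (snd rs) ds xs)))"
    by (rule sum.cong) (use lam_term_ins_right[OF k] in auto)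
  finally show ?thesis
    unfolding t_ins_right_def g_ins_right_def
      by (simp add: scale_sum_right case_prod_beta mult.assoc)
qed

lemma sum_g_ins_right:
    "(\<Sum>p\<in>Sigma {1..<n} (\<lambda>k. ins_pos (n - k)). g_ins_right p)
    = - (\<Sum>p\<in>lam_ins_right_idx. g_lam_ins p)"
proof -
  have "(\<Sum>p\<in>Sigma {1..<n} (\<lambda>k. ins_pos (n - k)). g_ins_right p)
      = (\<Sum>p\<in>lam_ins_right_idx. - g_lam_ins p)"
  proof (rule sum.reindex_bij_witness[where j="\<lambda>(k, (r, s)). ((k + r, s), k)" and i="\<lambda>((r, s), k'). (k', (r - k', s))"])
    fix a assume "a \<in> Sigma {1..<n} (\<lambda>k. ins_pos (n - k))"
    then obtain k r s where a: "a = (k, (r, s))" "1 \<le> k" "k < n" "1 \<le> s" "r + s \<le> n - k"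
      unfolding ins_pos_def by auto
    show "(case case a of (k, r, s) \<Rightarrow> ((k + r, s), k) of (x, xa) \<Rightarrow> (case x of (r, s) \<Rightarrow> \<lambda>k'. (k', r - k', s)) xa) = a"
      using a by simp
    show "(case a of (k, r, s) \<Rightarrow> ((k + r, s), k)) \<in> lam_ins_right_idx"
      using a unfolding lam_ins_right_idx_def ins_pos_def by auto
    show "- g_lam_ins (case a of (k, r, s) \<Rightarrow> ((k + r, s), k)) = g_ins_right a"
    proof -
      have s1: "sum_list (take k (ins_degs (k + r) s ds)) = sum_list (take k ds)"
        using ins_degs_take2[of k "k + r" ds s] a len by simp
      have s2: "sum_list (take (k + r) ds) = sum_list (take k ds) + sum_list (take r (drop k ds))"
        by (rule sum_take_add)
      have sg: "(psign (lam_sign n k ds) * psign (sum_list (take k ds) + 1 - int k) * psign (ins_sign (n - k) r s (drop k ds)) :: 'k)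
         = - (psign (ins_sign n (k + r) s ds) * psign
           (lam_sign (n - s + 1) k (ins_degs (k + r) s ds)))"
        unfolding lam_sign_def ins_sign_def s1 s2
          using sign_ins_right[of k n r s "sum_list (take k ds)" "sum_list (take r (drop k ds))"] a
        by (simp add: diff_diff_add)
      have g1: "g_ins_right (k, (r, s))
        = sc (psign (lam_sign n k ds) * psign (sum_list (take k ds) + 1 - int k) * psign (ins_sign (n - k) r s (drop k ds))) (lam_term k (ins_degs (k + r) s ds) (ins_elems m_tr (k + r) s ds xs))"
        unfolding g_ins_right_def by (simp only: prod.case)
      have g2: "g_lam_ins ((k + r, s), k)
        = sc (psign (ins_sign n (k + r) s ds) * psign
        (lam_sign (n - s + 1) k (ins_degs (k + r) s ds)))
        (lam_term k (ins_degs (k + r) s ds) (ins_elems m_tr (k + r) s ds xs))"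
        unfolding g_lam_ins_def by (simp only: prod.case)
      show ?thesis unfolding a(1) prod.case g1 g2 sg scale_minus_left by (rule refl)
    qed
  next
    fix b assume "b \<in> lam_ins_right_idx"
    then obtain r s k' where b: "b = ((r, s), k')" "1 \<le> s" "r + s \<le> n" "1 \<le> k'" "k' < n - s + 1"
      "k' \<le> r"
      unfolding lam_ins_right_idx_def ins_pos_def by auto
    show "(case case b of (x, xa) \<Rightarrow> (case x of (r, s) \<Rightarrow> \<lambda>k'. (k', r - k', s)) xa of (k, r, s) \<Rightarrow> ((k + r, s), k)) = b"
      using b by simp
    show "(case b of (x, xa) \<Rightarrow> (case x of (r, s) \<Rightarrow> \<lambda>k'. (k', r - k', s)) xa) \<in> Sigma {1..<n} (\<lambda>k. ins_pos (n - k))"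
      using b unfolding ins_pos_def by auto
  qed
  also have "\<dots> = - (\<Sum>p\<in>lam_ins_right_idx. g_lam_ins p)" by (simp add: sum_negf)
  finally show ?thesis .
qed

lemma sum_t_ins_right: "(\<Sum>k\<in>{1..<n}. t_ins_right k) = - (\<Sum>p\<in>lam_ins_right_idx. g_lam_ins p)"
proof -
  have "(\<Sum>k\<in>{1..<n}. t_ins_right k) = (\<Sum>k\<in>{1..<n}. \<Sum>rs\<in>ins_pos (n - k). g_ins_right (k, rs))"
    by (rule sum.cong) (simp_all add: t_ins_right_eq)
  then show ?thesis using sum.Sigma[of "{1..<n}" "\<lambda>k. ins_pos (n - k)"
      "\<lambda>k rs. g_ins_right (k, rs)"] ins_pos_finite sum_g_ins_right by (simp add: case_prod_beta')
qed

lemma t_lam_left_eq: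
  assumes K: "K \<in> {1..<n}"
  shows "t_lam_left K = (\<Sum>J\<in>{1..<K}. g_lam_left (K, J))"
proof -
  have yA: "f_tr (n - K) (drop K ds) (drop K xs) \<in> A (sum_list (drop K ds) + 1 - int (n - K))"
    by (rule f_tr_A[OF homog_drop[OF hom]]) (use K len in auto)
  have lX: "length (take K ds) = K" using K len by simp
  show ?thesis
    unfolding t_lam_left_def g_lam_left_def lam_eq_sum_lam_term[OF lX] prod.case
    by (subst linear_on_sum_scale[OF mu_linear_left[OF yA] A_subspace])
      (use lam_term_A[OF homog_take[OF hom] lX] in \<open>simp_all add: scale_sum_right\<close>)
qed

lemma t_lam_right_eq:
  assumes k: "k \<in> {1..<n}"
  shows "t_lam_right k = (\<Sum>j\<in>{1..<n - k}. g_lam_right (k, j))"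
proof -
  have xA: "f_tr k (take k ds) (take k xs) \<in> A (sum_list (take k ds) + 1 - int k)"
    by (rule f_tr_A[OF homog_take[OF hom]]) (use k len in auto)
  have lY: "length (drop k ds) = n - k" using k len by simp
  show ?thesis
    unfolding t_lam_right_def g_lam_right_def lam_eq_sum_lam_term[OF lY] prod.case
    by (subst linear_on_sum_scale[OF mu_linear_right[OF xA] A_subspace])
      (use lam_term_A[OF homog_drop[OF hom] lY] in \<open>simp_all add: scale_sum_right mult.assoc\<close>)
qed

lemma g_lam_right_eq:
  assumes a: "1 \<le> k" "1 \<le> j" "k + j < n"
  shows "g_lam_right (k, j) = - g_lam_left (k + j, k)"
proof -
  let ?x = "f_tr k (take k ds) (take k xs)"
  let ?y = "f_tr j (take j (drop k ds)) (take j (drop k xs))"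
  let ?z = "f_tr (n - (k + j)) (drop (k + j) ds) (drop (k + j) xs)"
  let ?al = "sum_list (take k ds) + 1 - int k"
  let ?be = "sum_list (take j (drop k ds)) + 1 - int j"
  let ?ga = "sum_list (drop (k + j) ds) + 1 - int (n - (k + j))"
  have lx: "length (take k ds) = k" "1 \<le> k" using a len by auto
  have ly: "length (take j (drop k ds)) = j" "1 \<le> j" using a len by auto
  have lz: "length (drop (k + j) ds) = n - (k + j)" "1 \<le> n - (k + j)" using a len by auto
  have xA: "?x \<in> A ?al" by (rule f_tr_A[OF homog_take[OF hom] lx])
  have yA: "?y \<in> A ?be" by (rule f_tr_A[OF homog_take[OF homog_drop[OF hom]] ly])
  have zA: "?z \<in> A ?ga" by (rule f_tr_A[OF homog_drop[OF hom] lz])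
  have as: "mu (?al + ?be) ?ga (mu ?al ?be ?x ?y) ?z = mu ?al (?be + ?ga) ?x (mu ?be ?ga ?y ?z)"
    by (rule mu_assoc[OF xA yA zA])
  have e1: "take k (take (k + j) ds) = take k ds" "drop k (take (k + j) ds) = take j (drop k ds)"
    "take k (take (k + j) xs) = take k xs" "drop k (take (k + j) xs) = take j (drop k xs)"
    "length (take (k + j) ds) - k = j" using a len by (auto simp: drop_take min_def)
  have mu1: "lam_term k (take (k + j) ds) (take (k + j) xs) = mu ?al ?be ?x ?y"
    unfolding lam_term_def e1 by simp
  have e2: "drop j (drop k ds) = drop (k + j) ds" "drop j (drop k xs) = drop (k + j) xs"
    "length (drop k ds) - j = n - (k + j)" using a len by (auto simp: add.commute)
  have mu2: "lam_term j (drop k ds) (drop k xs) = mu ?be ?ga ?y ?z"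
    unfolding lam_term_def e2 by simp
  have d1: "sum_list (take (k + j) ds) + 2 - int (k + j) = ?al + ?be" using sum_take_add[of k j ds]
      by simp
  have d2: "sum_list (drop k ds) + 2 - int (n - k) = ?be + ?ga"
    using sum_take_drop[of "drop k ds" j] e2 a by (simp add: of_nat_diff)
  have sg: "(psign (lam_sign n (k + j) ds) * psign (lam_sign (k + j) k (take (k + j) ds)) :: 'k)
    = - (psign (lam_sign n k ds) * psign (sum_list (take k ds) + 1 - int k) * psign
      (lam_sign (n - k) j (drop k ds)))"
    unfolding lam_sign_def e1(1) sum_take_add
      using sign_assoc[of k j n "sum_list (take k ds)" "sum_list (take j (drop k ds))"] a
    by simp
  have g4: "g_lam_left (k + j, k)
      = sc (psign (lam_sign n (k + j) ds) * psign (lam_sign (k + j) k (take (k + j) ds)))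
      (mu (?al + ?be) ?ga (mu ?al ?be ?x ?y) ?z)"
    unfolding g_lam_left_def prod.case mu1 d1 by simp
  have g5: "g_lam_right (k, j)
      = sc (psign (lam_sign n k ds) * psign (sum_list (take k ds) + 1 - int k) * psign
      (lam_sign (n - k) j (drop k ds)))
      (mu ?al (?be + ?ga) ?x (mu ?be ?ga ?y ?z))"
    unfolding g_lam_right_def prod.case mu2 d2 by simp
  show ?thesis unfolding g4 g5 sg as scale_minus_left by simp
qed

lemma sum_t_lam_cancel: "(\<Sum>k\<in>{1..<n}. t_lam_left k) + (\<Sum>k\<in>{1..<n}. t_lam_right k) = 0"
proof -
  have "(\<Sum>k\<in>{1..<n}. t_lam_right k) = (\<Sum>p\<in>Sigma {1..<n} (\<lambda>k. {1..<n - k}). g_lam_right p)"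
    using t_lam_right_eq sum.Sigma[of "{1..<n}" "\<lambda>k. {1..<n - k}" "\<lambda>k j. g_lam_right (k, j)"]
    by (simp add: case_prod_beta')
  also have "\<dots> = (\<Sum>p\<in>Sigma {1..<n} (\<lambda>K. {1..<K}). - g_lam_left p)"
  proof (rule sum.reindex_bij_witness[where j="\<lambda>(k, j). (k + j, k)" and i="\<lambda>(K, J). (J, K - J)"])
    fix a assume "a \<in> Sigma {1..<n} (\<lambda>k. {1..<n - k})"
    then obtain k j where a: "a = (k, j)" "1 \<le> k" "1 \<le> j" "k + j < n" by auto
    show "(case case a of (k, j) \<Rightarrow> (k + j, k) of (K, J) \<Rightarrow> (J, K - J)) = a" using a by simp
    show "(case a of (k, j) \<Rightarrow> (k + j, k)) \<in> Sigma {1..<n} (\<lambda>K. {1..<K})" using a by auto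
    show "- g_lam_left (case a of (k, j) \<Rightarrow> (k + j, k)) = g_lam_right a"
      using g_lam_right_eq[OF a(2-4)] a(1) by simp
  next
    fix b assume "b \<in> Sigma {1..<n} (\<lambda>K. {1..<K})"
    then obtain K J where b: "b = (K, J)" "1 \<le> J" "J < K" "K < n" by auto
    show "(case case b of (K, J) \<Rightarrow> (J, K - J) of (k, j) \<Rightarrow> (k + j, k)) = b" using b by simp
    show "(case b of (K, J) \<Rightarrow> (J, K - J)) \<in> Sigma {1..<n} (\<lambda>k. {1..<n - k})" using b by auto
  qed
  also have "\<dots> = - (\<Sum>k\<in>{1..<n}. t_lam_left k)"
    using t_lam_left_eq sum.Sigma[of "{1..<n}" "\<lambda>K. {1..<K}" "\<lambda>K J. g_lam_left (K, J)"]
    by (simp add: case_prod_beta' sum_negf)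
  finally show ?thesis by simp
qed

lemma d_lam_insert_sum_lam:
  assumes IH: "\<And>k es ys. 1 \<le> k \<Longrightarrow> k < n \<Longrightarrow> length es = k \<Longrightarrow> homog M es ys \<Longrightarrow>
      d (sum_list es + 1 - int k) (f_tr k es ys) = insert_sum sc f_tr m_tr k es ys - lam k es ys"
  shows "d (sum_list ds + 2 - int n) (lam n ds xs) + insert_sum sc lam m_tr n ds xs = 0"
proof -
  have "d (sum_list ds + 2 - int n) (lam n ds xs) =
      (\<Sum>k\<in>{1..<n}. sc (psign (lam_sign n k ds)) (d (sum_list ds + 2 - int n) (lam_term k ds xs)))"
    unfolding lam_eq_sum_lam_term[OF len]
    by (rule linear_on_sum_scale[OF d_linear A_subspace]) (use lam_term_A[OF hom len] in blast)
  also have "\<dots> = (\<Sum>k\<in>{1..<n}. t_ins_left k) - (\<Sum>k\<in>{1..<n}. t_lam_left k)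
      + (\<Sum>k\<in>{1..<n}. t_ins_right k) - (\<Sum>k\<in>{1..<n}. t_lam_right k)"
    by (simp add: d_lam_term[OF IH] sum.distrib sum_subtractf)
  also have "\<dots> = - (\<Sum>p\<in>lam_ins_left_idx \<union> lam_ins_right_idx. g_lam_ins p)"
  proof -
    have "finite (Sigma (ins_pos n) (\<lambda>rs. {1..<n - snd rs + 1}))" using ins_pos_finite by auto
    then have "finite lam_ins_left_idx" "finite lam_ins_right_idx"
      unfolding lam_ins_left_idx_def lam_ins_right_idx_def by auto
    moreover have "lam_ins_left_idx \<inter> lam_ins_right_idx = {}"
      unfolding lam_ins_left_idx_def lam_ins_right_idx_def by auto
    ultimately have "(\<Sum>p\<in>lam_ins_left_idx \<union> lam_ins_right_idx. g_lam_ins p) =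
        (\<Sum>p\<in>lam_ins_left_idx. g_lam_ins p) + (\<Sum>p\<in>lam_ins_right_idx. g_lam_ins p)"
      by (rule sum.union_disjoint)
    moreover have "(\<Sum>k\<in>{1..<n}. t_lam_right k) = - (\<Sum>k\<in>{1..<n}. t_lam_left k)"
      using sum_t_lam_cancel by (simp add: eq_neg_iff_add_eq_0 add.commute)
    ultimately show ?thesis using sum_t_ins_left sum_t_ins_right by (simp add: algebra_simps)
  qed
  also have "lam_ins_left_idx \<union> lam_ins_right_idx = Sigma (ins_pos n) (\<lambda>rs. {1..<n - snd rs + 1})"
    unfolding lam_ins_left_idx_def lam_ins_right_idx_def by auto
  finally show ?thesis unfolding insert_sum_lam_eq by simp
qed

end

lemma insert_sum_split:
  assumes "length ds = n" "1 \<le> n" "length xs = n"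
  shows "insert_sum sc Ou In n ds xs = Ou 1 [sum_list ds + 2 - int n] [In n ds xs] +
     (\<Sum>rs\<in>ins_pos n - {(0, n)}. sc (psign (ins_sign n (fst rs) (snd rs) ds))
        (Ou (n - snd rs + 1) (ins_degs (fst rs) (snd rs) ds) (ins_elems In (fst rs) (snd rs) ds xs)))"
proof -
  have m: "(0, n) \<in> ins_pos n" using assms unfolding ins_pos_def by simp
  have "sc (psign (ins_sign n 0 n ds)) (Ou (n - n + 1) (ins_degs 0 n ds) (ins_elems In 0 n ds xs))
      = Ou 1 [sum_list ds + 2 - int n] [In n ds xs]"
    using assms unfolding ins_sign_def ins_degs_def ins_elems_def psign_def by simp
  then show ?thesis
    unfolding insert_sum_eq sum.remove[OF ins_pos_finite m] by (simp only: fst_conv snd_conv)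
qed

lemma insert_sum_outer_factor:
  fixes Out :: "nat \<Rightarrow> int list \<Rightarrow> 'a list \<Rightarrow> 'a" and G :: "int \<Rightarrow> 'a \<Rightarrow> 'a"
  assumes G: "\<And>e. linear_on sc sc (A e) (G e)"
    and Out: "\<And>k es ys. 2 \<le> k \<Longrightarrow> length es = k \<Longrightarrow> homog M es ys \<Longrightarrow>
        Out k es ys = G (sum_list es + 2 - int k) (lam k es ys)"
    and n: "1 \<le> n" "length ds = n" "homog M ds xs"
  shows "insert_sum sc Out m_tr n ds xs =
    Out 1 [sum_list ds + 2 - int n] [m_tr n ds xs] + G (sum_list ds + 2 - int n + 1) (insert_sum sc lam m_tr n ds xs)"
proof -
  define D where "D = sum_list ds + 2 - int n + 1"
  define R where "R = ins_pos n - {(0, n)}"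
  let ?sgn = "\<lambda>rs. psign (ins_sign n (fst rs) (snd rs) ds)"
  let ?es = "\<lambda>rs. ins_degs (fst rs) (snd rs) ds" and ?ys =
      "\<lambda>rs. ins_elems m_tr (fst rs) (snd rs) ds xs"
  let ?k = "\<lambda>rs. n - snd rs + 1"
  have lx: "length xs = n" using homog_length n by metis
  have rs: "2 \<le> ?k rs" "length (?es rs) = ?k rs" "homog M (?es rs) (?ys rs)"
    "sum_list (?es rs) + 2 - int (?k rs) = D" if "rs \<in> R" for rs
  proof -
    have a: "2 \<le> ?k rs" "fst rs + snd rs \<le> n" "1 \<le> snd rs" "(fst rs, snd rs) \<in> ins_pos n"
      using that unfolding R_def ins_pos_def by auto
    then show "2 \<le> ?k rs" "length (?es rs) = ?k rs" "homog M (?es rs) (?ys rs)"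
      using length_ins_degs homog_ins[OF n(3,2)] n(2) by auto
    show "sum_list (?es rs) + 2 - int (?k rs) = D"
      using sum_list_ins_degs[of "fst rs" "snd rs" ds] a n(2) unfolding D_def
        by (simp add: of_nat_diff)
  qed
  have "insert_sum sc Out m_tr n ds xs =
      Out 1 [sum_list ds + 2 - int n] [m_tr n ds xs] + (\<Sum>rs\<in>R. sc (?sgn rs) (Out (?k rs) (?es rs) (?ys rs)))"
    unfolding R_def by (rule insert_sum_split[OF n(2,1) lx])
  also have "(\<Sum>rs\<in>R. sc (?sgn rs) (Out (?k rs) (?es rs) (?ys rs))) =
      (\<Sum>rs\<in>R. sc (?sgn rs) (G D (lam (?k rs) (?es rs) (?ys rs))))"
    by (rule sum.cong[OF refl]) (use Out rs in metis)
  also have "\<dots> = G D (\<Sum>rs\<in>R. sc (?sgn rs) (lam (?k rs) (?es rs) (?ys rs)))"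
    by (rule linear_on_sum_scale[OF G A_subspace, symmetric]) (use lam_A rs in metis)
  also have "(\<Sum>rs\<in>R. sc (?sgn rs) (lam (?k rs) (?es rs) (?ys rs))) = insert_sum sc lam m_tr n ds xs"
    using insert_sum_split[OF n(2,1) lx, of lam m_tr] lam_le1 unfolding R_def by simp
  finally show ?thesis unfolding D_def .
qed

text \<open>The second identity for n needs the first one for all arities below n.\<close>

lemma f_tr_relations:
  "1 \<le> n \<Longrightarrow> length ds = n \<Longrightarrow> homog M ds xs \<Longrightarrow>
     d (sum_list ds + 1 - int n) (f_tr n ds xs) = insert_sum sc f_tr m_tr n ds xs - lam n ds xs \<and>
     d (sum_list ds + 2 - int n) (lam n ds xs) + insert_sum sc lam m_tr n ds xs = 0"
proof (induction n arbitrary: ds xs rule: less_induct)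
  case (less n)
  define D where "D = sum_list ds + 2 - int n"
  define IL where "IL = insert_sum sc lam m_tr n ds xs"
  have "d D (lam n ds xs) + IL = 0"
    unfolding D_def IL_def by (rule d_lam_insert_sum_lam[OF less.prems(3,2)]) (use less.IH in blast)
  then have dlam: "d D (lam n ds xs) = - IL" by (simp add: eq_neg_iff_add_eq_0)
  have lamA: "lam n ds xs \<in> A D" unfolding D_def by (rule lam_A[OF less.prems(3,2)])
  have ILA: "IL \<in> A (D + 1)" using d_A[OF lamA] dlam subspace_neg[OF A_subspace] by fastforce
  have IS: "insert_sum sc f_tr m_tr n ds xs = m_tr n ds xs + h (D + 1) IL"
    using insert_sum_outer_factor[of h f_tr, OF h_linear f_tr_ge2 less.prems] f_tr_1
    unfolding D_def IL_def by simp
  have "d (D - 1) (f_tr n ds xs) = m_tr n ds xs + h (D + 1) IL - lam n ds xs"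
  proof (cases "n = 1")
    case True
    then obtain e x where "ds = [e]" "xs = [x]"
      using less.prems(2) homog_length[OF less.prems(3)]
        by (metis One_nat_def length_0_conv length_Suc_conv)
    then show ?thesis using True dlam lam_le1[of n] unfolding D_def ainf_ops_def
      by (simp add: f_tr_1)
  next
    case False
    then have "f_tr n ds xs = h D (lam n ds xs)" "m_tr n ds xs = P D (lam n ds xs)"
      using less.prems(1) f_tr_ge2 unfolding ainf_ops_def nu_tr_def D_def by auto
    moreover have "h (D + 1) (d D (lam n ds xs)) = - h (D + 1) IL"
      unfolding dlam using linear_on_neg[OF h_linear ILA] .
    ultimately show ?thesis using P_homotopy[OF lamA] by (simp add: algebra_simps)
  qed
  moreover have "D - 1 = sum_list ds + 1 - int n" unfolding D_def by simp
  ultimately show ?case using IS dlam unfolding D_def IL_def by simp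
qed

lemma m_tr_ainf_relation:
  assumes "1 \<le> n" "length ds = n" "homog M ds xs"
  shows "insert_sum sc m_tr m_tr n ds xs = 0"
proof -
  define D where "D = sum_list ds + 2 - int n"
  have lamA: "lam n ds xs \<in> A D" unfolding D_def by (rule lam_A[OF assms(3,2)])
  have m_tr_ge2: "m_tr k es ys = P (sum_list es + 2 - int k) (lam k es ys)" if "2 \<le> k" for k es ys
    using that unfolding ainf_ops_def nu_tr_def by simp
  have "insert_sum sc m_tr m_tr n ds xs
      = d D (m_tr n ds xs) + P (D + 1) (insert_sum sc lam m_tr n ds xs)"
    using insert_sum_outer_factor[of P m_tr, OF P_linear m_tr_ge2 assms]
      unfolding D_def ainf_ops_def
    by simp
  also have "d D (m_tr n ds xs) = P (D + 1) (d D (lam n ds xs))"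
  proof (cases "n = 1")
    case True
    then obtain e x where "ds = [e]" "xs = [x]"
      using assms(2) homog_length[OF assms(3)] by (metis One_nat_def length_0_conv length_Suc_conv)
    moreover have "x \<in> A e" using homog_hd[OF assms(3)] assms(2) True M_A \<open>ds = [e]\<close> \<open>xs = [x]\<close>
      by auto
    ultimately show ?thesis
      using True d_d[of x e] lam_le1[of n] unfolding D_def ainf_ops_def by (simp add: add.commute)
  next
    case False
    then show ?thesis using assms(1) P_d_commute[OF lamA] unfolding ainf_ops_def nu_tr_def D_def
      by simp
  qed
  also have "P (D + 1) (d D (lam n ds xs)) + P (D + 1) (insert_sum sc lam m_tr n ds xs) =
      P (D + 1) (d D (lam n ds xs) + insert_sum sc lam m_tr n ds xs)"
  proof -
    have "d D (lam n ds xs) + insert_sum sc lam m_tr n ds xs = 0"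
      using f_tr_relations[OF assms] unfolding D_def by simp
    then have "insert_sum sc lam m_tr n ds xs \<in> A (D + 1)"
      using d_A[OF lamA] subspace_neg[OF A_subspace] by (metis add.commute add_eq_0_iff)
    then show ?thesis using linear_on_add[OF P_linear d_A[OF lamA]] by simp
  qed
  also have "\<dots> = 0"
    using f_tr_relations[OF assms] linear_on_0[OF P_linear A_subspace] unfolding D_def by simp
  finally show ?thesis .
qed

abbreviation ops_A where "ops_A \<equiv> ainf_ops d (dg_nu mu)"

definition comp_term :: "nat \<Rightarrow> int list \<Rightarrow> 'a list \<Rightarrow> nat list \<Rightarrow> 'a" where
  "comp_term n ds xs cs = (let dbs = blocks cs ds; xbs = blocks cs xs in
        sc (psign (keller_exp cs + koszul_exp 0 cs dbs))
           (ops_A (length cs)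
              (map (\<lambda>(i, b). sum_list b + 1 - int i) (zip cs dbs))
              (map (\<lambda>(i, (db, xb)). f_tr i db xb) (zip cs (zip dbs xbs)))))"

lemma comp_sum_eq_terms:
    "comp_sum sc ops_A f_tr n ds xs = (\<Sum>cs\<in>compositions n. comp_term n ds xs cs)"
  unfolding comp_sum_def comp_term_def by simp

lemma comp_term_long: "3 \<le> length cs \<Longrightarrow> comp_term n ds xs cs = 0"
  unfolding comp_term_def Let_def ainf_ops_def dg_nu_def by simp

lemma comp_term_one: "length ds = n \<Longrightarrow> length xs = n
    \<Longrightarrow> comp_term n ds xs [n] = d (sum_list ds + 1 - int n) (f_tr n ds xs)"
  unfolding comp_term_def Let_def ainf_ops_def keller_exp_single by (simp add: psign_def)

lemma comp_term_two: "length ds = n \<Longrightarrow> length xs = n \<Longrightarrow> k < n \<Longrightarrow>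
   comp_term n ds xs [k, n - k] = sc (psign (lam_sign n k ds)) (lam_term k ds xs)"
  unfolding comp_term_def Let_def ainf_ops_def dg_nu_def keller_exp_pair lam_term_def lam_sign_def
      by simp

lemma comp_sum_f_tr:
  assumes "1 \<le> n" "length ds = n" "length xs = n"
  shows "comp_sum sc ops_A f_tr n ds xs = d (sum_list ds + 1 - int n) (f_tr n ds xs) + lam n ds xs"
proof -
  define C where "C = insert [n] ((\<lambda>k. [k, n - k]) ` {1..<n})"
  have CC: "C \<subseteq> compositions n" unfolding C_def compositions_def using assms(1) by auto
  have out: "comp_term n ds xs cs = 0" if cs: "cs \<in> compositions n - C" for cs
  proof (rule comp_term_long)
    show "3 \<le> length cs"
      using compositions_length_le_2[of cs n] cs assms(1) unfolding C_def by force
  qed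
  have "comp_sum sc ops_A f_tr n ds xs = (\<Sum>cs\<in>C. comp_term n ds xs cs)"
    unfolding comp_sum_eq_terms
      by (rule sum.mono_neutral_right[OF compositions_finite CC]) (use out in blast)
  also have "\<dots> = comp_term n ds xs [n] + (\<Sum>cs\<in>(\<lambda>k. [k, n - k]) ` {1..<n}. comp_term n ds xs cs)"
    unfolding C_def by (rule sum.insert) auto
  also have "(\<Sum>cs\<in>(\<lambda>k. [k, n - k]) ` {1..<n}. comp_term n ds xs cs)
      = (\<Sum>k\<in>{1..<n}. comp_term n ds xs [k, n - k])"
    by (rule sum.reindex_cong[where l="\<lambda>k. [k, n - k]"]) (auto simp: inj_on_def)
  also have "\<dots> = lam n ds xs"
    unfolding lam_eq_sum_lam_term[OF assms(2)]
      by (rule sum.cong[OF refl]) (use comp_term_two assms in auto)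
  finally show ?thesis using comp_term_one assms by simp
qed

lemma f_tr_morphism_relation:
  assumes "1 \<le> n" "length ds = n" "homog M ds xs"
  shows "insert_sum sc f_tr m_tr n ds xs = comp_sum sc ops_A f_tr n ds xs"
proof -
  have lx: "length xs = n" using homog_length assms by metis
  show ?thesis unfolding comp_sum_f_tr[OF assms(1,2) lx] using f_tr_relations[OF assms] by simp
qed

lemma lam_linear_from:
  assumes IH: "\<And>k es ys j. 1 \<le> k \<Longrightarrow> k < s \<Longrightarrow> length es = k \<Longrightarrow> homog M es ys \<Longrightarrow> j < k \<Longrightarrow>
      linear_on sc sc (M (es ! j)) (\<lambda>y. f_tr k es (ys[j := y]))"
    and len: "length ds = s" and hom: "homog M ds xs" and i: "i < s"
  shows "linear_on sc sc (M (ds ! i)) (\<lambda>y. lam s ds (xs[i := y]))"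
  unfolding lam_def
proof (rule linear_on_sum_fun, rule linear_on_scale_fun)
  fix k assume k: "k \<in> {1..<s}"
  have lx: "length xs = s" using homog_length hom len by metis
  show "linear_on sc sc (M (ds ! i)) (\<lambda>y. mu (sum_list (take k ds) + 1 - int k) (sum_list (drop k ds) + 1 - int (s - k))
       (f_tr k (take k ds) (take k (xs[i := y]))) (f_tr (s - k) (drop k ds) (drop k (xs[i := y]))))"
  proof (cases "i < k")
    case True
    have e1: "\<And>y. take k (xs[i := y]) = (take k xs)[i := y]" by (rule take_update_swap)
    have e2: "\<And>y. drop k (xs[i := y]) = drop k xs" using True by simp
    have ly: "length (drop k ds) = s - k" "1 \<le> s - k" using k len by auto
    have yA: "f_tr (s - k) (drop k ds) (drop k xs) \<in> A (sum_list (drop k ds) + 1 - int (s - k))"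
      by (rule f_tr_A[OF homog_drop[OF hom] ly])
    have lt: "length (take k ds) = k" "1 \<le> k" "k < s" using k len by auto
    have nth: "take k ds ! i = ds ! i" using True by simp
    have L: "linear_on sc sc (M (ds ! i)) (\<lambda>y. f_tr k (take k ds) ((take k xs)[i := y]))"
      using IH[OF lt(2,3,1) homog_take[OF hom] True] nth by simp
    have memb: "f_tr k (take k ds) ((take k xs)[i := y]) \<in> A (sum_list (take k ds) + 1 - int k)" if y: "y \<in> M (ds ! i)" for y
    proof -
      have "homog M (take k ds) ((take k xs)[i := y])"
        by (rule homog_update[OF homog_take[OF hom]]) (use True lt nth y in auto)
      then show ?thesis by (rule f_tr_A[OF _ lt(1,2)])
    qed
    show ?thesis unfolding e1 e2 by (rule linear_on_compose[OF L memb mu_linear_left[OF yA]])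
  next
    case False
    have e1: "\<And>y. take k (xs[i := y]) = take k xs" using False by simp
    have e2: "\<And>y. drop k (xs[i := y]) = (drop k xs)[i - k := y]" using False
      by (simp add: drop_update_swap)
    have lt: "length (take k ds) = k" "1 \<le> k" using k len by auto
    have xA: "f_tr k (take k ds) (take k xs) \<in> A (sum_list (take k ds) + 1 - int k)"
      by (rule f_tr_A[OF homog_take[OF hom] lt])
    have ly: "length (drop k ds) = s - k" "1 \<le> s - k" "s - k < s" using k len by auto
    have ik: "i - k < s - k" using False i by simp
    have nth: "drop k ds ! (i - k) = ds ! i" using False len i by simp
    have L: "linear_on sc sc (M (ds ! i)) (\<lambda>y. f_tr (s - k) (drop k ds) ((drop k xs)[i - k := y]))"
      using IH[OF ly(2,3,1) homog_drop[OF hom] ik] nth by simp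
    have memb: "f_tr (s - k) (drop k ds) ((drop k xs)[i - k := y]) \<in> A (sum_list (drop k ds) + 1 - int (s - k))"
      if y: "y \<in> M (ds ! i)" for y
    proof -
      have "homog M (drop k ds) ((drop k xs)[i - k := y])"
        by (rule homog_update[OF homog_drop[OF hom]]) (use ik ly nth y in auto)
      then show ?thesis by (rule f_tr_A[OF _ ly(1,2)])
    qed
    show ?thesis unfolding e1 e2 by (rule linear_on_compose[OF L memb mu_linear_right[OF xA]])
  qed
qed

lemma f_tr_linear:
  "1 \<le> s \<Longrightarrow> length ds = s \<Longrightarrow> homog M ds xs \<Longrightarrow> i < s
      \<Longrightarrow> linear_on sc sc (M (ds ! i)) (\<lambda>y. f_tr s ds (xs[i := y]))"
proof (induction s arbitrary: ds xs i rule: less_induct)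
  case (less s)
  show ?case
  proof (cases "s = 1")
    case True
    have lx: "length xs = 1" using homog_length less.prems True by metis
    then obtain x0 where "xs = [x0]" by (cases xs) auto
    moreover have "i = 0" using less.prems True by simp
    ultimately show ?thesis using True f_tr_1 linear_on_id by simp
  next
    case False
    then have s2: "2 \<le> s" using less.prems by simp
    have LL: "linear_on sc sc (M (ds ! i)) (\<lambda>y. lam s ds (xs[i := y]))"
      by (rule lam_linear_from[OF _ less.prems(2,3,4)]) (use less.IH in blast)
    have memb: "lam s ds (xs[i := y]) \<in> A (sum_list ds + 2 - int s)" if y: "y \<in> M (ds ! i)" for y
      by (rule lam_A[OF homog_update[OF less.prems(3)] less.prems(2)]) (use less.prems y in auto)
    have "linear_on sc sc (M (ds ! i)) (\<lambda>y. h (sum_list ds + 2 - int s) (lam s ds (xs[i := y])))"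
      by (rule linear_on_compose[OF LL memb h_linear])
    then show ?thesis using f_tr_ge2[OF s2] by simp
  qed
qed

lemma lam_linear: "length ds = s \<Longrightarrow> homog M ds xs \<Longrightarrow> i < s
    \<Longrightarrow> linear_on sc sc (M (ds ! i)) (\<lambda>y. lam s ds (xs[i := y]))"
  by (rule lam_linear_from) (use f_tr_linear in blast)+

lemma f_tr_multilinear: "1 \<le> s \<Longrightarrow> multilinear_op sc M sc A s (1 - int s) (f_tr s)"
  unfolding multilinear_op_def
proof (intro conjI allI impI)
  fix ds xs assume "1 \<le> s" "length ds = s" "homog M ds xs"
  then show "f_tr s ds xs \<in> A (sum_list ds + (1 - int s))" using f_tr_A by (simp add: add_diff_eq)
next
  fix ds xs i assume "1 \<le> s" "length ds = s" "homog M ds xs" "i < s"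
  then show "linear_on sc sc (M (ds ! i)) (\<lambda>y. f_tr s ds (xs[i := y]))" by (rule f_tr_linear)
qed

lemma nu_tr_multilinear: "2 \<le> s \<Longrightarrow> multilinear_op sc M sc M s (2 - int s) (nu_tr s)"
  unfolding multilinear_op_def
proof (intro conjI allI impI)
  fix ds xs assume "2 \<le> s" "length ds = s" "homog M ds xs"
  then show "nu_tr s ds xs \<in> M (sum_list ds + (2 - int s))" using nu_tr_M by (simp add: add_diff_eq)
next
  fix ds xs i assume a: "2 \<le> s" "length ds = s" "homog M ds xs" "i < s"
  have memb: "lam s ds (xs[i := y]) \<in> A (sum_list ds + 2 - int s)" if y: "y \<in> M (ds ! i)" for y
    by (rule lam_A[OF homog_update[OF a(3)] a(2)]) (use a y in auto)
  show "linear_on sc sc (M (ds ! i)) (\<lambda>y. nu_tr s ds (xs[i := y]))"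
    unfolding nu_tr_def by (rule linear_on_compose[OF lam_linear[OF a(2,3,4)] memb P_linear])
qed

end

locale filtered_homotopy_transfer = homotopy_transfer +
  fixes F :: "int \<Rightarrow> int \<Rightarrow> _ set"
  assumes F_subspace: "subspace (F p n)"
    and mu_F: "x \<in> F p n \<Longrightarrow> y \<in> F q m \<Longrightarrow> mu n m x y \<in> F (p + q) (n + m)"
    and h_F: "x \<in> F p n \<Longrightarrow> h n x \<in> F p (n - 1)"
    and P_F: "x \<in> F p n \<Longrightarrow> P n x \<in> F p n"
begin

lemma f_tr_lam_F:
  "1 \<le> s \<Longrightarrow> length ds = s \<Longrightarrow> homog M ds xs \<Longrightarrow> length ps = s \<Longrightarrow> (\<forall>i<s. xs ! i \<in> F (ps ! i) (ds ! i)) \<Longrightarrow>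
    f_tr s ds xs \<in> F (sum_list ps) (sum_list ds + 1 - int s)
      \<and> lam s ds xs \<in> F (sum_list ps) (sum_list ds + 2 - int s)"
proof (induction s arbitrary: ds xs ps rule: less_induct)
  case (less s)
  have "lam_term k ds xs \<in> F (sum_list ps) (sum_list ds + 2 - int s)" if k: "k \<in> {1..<s}" for k
  proof -
    have lx: "length xs = s" using homog_length less.prems by metis
    have "\<forall>i<k. take k xs ! i \<in> F (take k ps ! i) (take k ds ! i)" using less.prems(5) k by auto
    then have f1: "f_tr k (take k ds) (take k xs) \<in> F (sum_list (take k ps)) (sum_list (take k ds) + 1 - int k)"
      using less.IH[of k "take k ds" "take k xs"
        "take k ps"] homog_take[OF less.prems(3)] k less.prems(2,4)
      by auto
    have "\<forall>i<s - k. drop k xs ! i \<in> F (drop k ps ! i) (drop k ds ! i)" using less.prems(2,4,5) k lx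
      by auto
    then have f2: "f_tr (s - k) (drop k ds) (drop k xs) \<in> F (sum_list (drop k ps)) (sum_list (drop k ds) + 1 - int (s - k))"
      using less.IH[of "s - k" "drop k ds" "drop k xs"
        "drop k ps"] homog_drop[OF less.prems(3)] k less.prems(2,4)
      by auto
    have "sum_list (take k ps) + sum_list (drop k ps) = sum_list ps"
      by (metis sum_list_append append_take_drop_id)
    moreover have "sum_list (take k ds) + 1 - int k + (sum_list (drop k ds) + 1 - int (s - k))
      = sum_list ds + 2 - int s"
      using lam_term_degree[of k ds] k less.prems(2) by simp
    ultimately show ?thesis unfolding lam_term_def less.prems(2) by (metis mu_F[OF f1 f2])
  qed
  then have lamF: "lam s ds xs \<in> F (sum_list ps) (sum_list ds + 2 - int s)"
    unfolding lam_eq_sum_lam_term[OF less.prems(2)]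
    by (intro subspace_sum[OF F_subspace] subspace_scale[OF F_subspace])
  show ?case
  proof (cases "s = 1")
    case True
    then obtain e x p where "ds = [e]" "xs = [x]" "ps = [p]"
      using less.prems(2,4) homog_length[OF less.prems(3)]
        by (metis One_nat_def length_0_conv length_Suc_conv)
    then show ?thesis using True less.prems(5) lamF f_tr_1 by auto
  next
    case False
    then show ?thesis using less.prems(1) f_tr_ge2 h_F[OF lamF] lamF by (simp add: algebra_simps)
  qed
qed

lemma f_tr_filtered: "1 \<le> s \<Longrightarrow> filtered_op M (\<lambda>p n. F p n \<inter> M n) F s (1 - int s) (f_tr s)"
  unfolding filtered_op_def
proof (intro allI impI)
  fix ps ds xs assume a: "1 \<le> s" "length ps = s" "length ds = s" "homog M ds xs"
    "\<forall>i<s. xs ! i \<in> F (ps ! i) (ds ! i) \<inter> M (ds ! i)"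
  then have "f_tr s ds xs \<in> F (sum_list ps) (sum_list ds + 1 - int s)" using f_tr_lam_F by blast
  then show "f_tr s ds xs \<in> F (sum_list ps) (sum_list ds + (1 - int s))" by (simp add: add_diff_eq)
qed

lemma nu_tr_filtered: "2 \<le> s
    \<Longrightarrow> filtered_op M (\<lambda>p n. F p n \<inter> M n) (\<lambda>p n. F p n \<inter> M n) s (2 - int s) (nu_tr s)"
  unfolding filtered_op_def
proof (intro allI impI)
  fix ps ds xs assume a: "2 \<le> s" "length ps = s" "length ds = s" "homog M ds xs"
    "\<forall>i<s. xs ! i \<in> F (ps ! i) (ds ! i) \<inter> M (ds ! i)"
  then have "lam s ds xs \<in> F (sum_list ps) (sum_list ds + 2 - int s)"
      using f_tr_lam_F[of s ds xs ps] by auto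
  then have "nu_tr s ds xs \<in> F (sum_list ps) (sum_list ds + 2 - int s)" unfolding nu_tr_def
      by (rule P_F)
  moreover have "nu_tr s ds xs \<in> M (sum_list ds + 2 - int s)" using nu_tr_M a by blast
  ultimately show "nu_tr s ds xs \<in> F (sum_list ps) (sum_list ds + (2 - int s)) \<inter> M (sum_list ds + (2 - int s))"
    by (simp add: add_diff_eq)
qed

end

section \<open>The filtered minimal model\<close>

sublocale filtered_dga \<subseteq> transfer: filtered_homotopy_transfer sc A d mu M P h F
  by unfold_locales
    (rule dga M_subspace M_A d_M P_linear P_M P_d_commute h_linear h_A P_homotopy
      F_subspace mu_F h_F P_F; assumption?)+

context filtered_dga
begin

lemma FM_eq: "FM = (\<lambda>p n. F p n \<inter> M n)"
  by (intro ext) (simp add: FM_def)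

lemma ainf_algebra_M: "ainf_algebra sc M d transfer.nu_tr"
  unfolding ainf_algebra_def graded_space_def
proof (intro conjI allI impI ballI)
  show "vector_space sc" by unfold_locales
  show "subspace (M n)" "linear_on sc sc (M n) (d n)" for n
    using M_subspace linear_on_subset[OF d_linear M_A] by blast+
qed (use d_M transfer.nu_tr_multilinear transfer.m_tr_ainf_relation in simp_all)

lemma filtration_FM: "filtration sc M FM"
  unfolding filtration_def
proof (intro conjI allI)
  show "subspace (FM p n)" "FM p n \<subseteq> M n" "FM (p + 1) n \<subseteq> FM p n" for p n
    by (fact FM_subspace FM_M FM_decreasing)+
  show "(\<Union>p. FM p n) = M n" for n
  proof
    show "(\<Union>p. FM p n) \<subseteq> M n" using FM_M by blast
    show "M n \<subseteq> (\<Union>p. FM p n)"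
    proof
      fix x assume x: "x \<in> M n"
      then obtain p where "x \<in> F p n" using F_exhaustive M_A by blast
      with x show "x \<in> (\<Union>p. FM p n)" unfolding FM_def by blast
    qed
  qed
  show "\<exists>p. FM p n = {0}" for n by (rule FM_bounded)
qed

lemma filtered_minimal_M: "filtered_minimal sc M FM d transfer.nu_tr"
  unfolding filtered_minimal_def filtered_ainf_algebra_def
proof (intro conjI allI ballI impI)
  show "ainf_algebra sc M d transfer.nu_tr" by (rule ainf_algebra_M)
  show "filtration sc M FM" by (rule filtration_FM)
  show "filtered_op M FM FM s (2 - int s) (transfer.nu_tr s)" if "2 \<le> s" for s
    unfolding FM_eq using transfer.nu_tr_filtered[OF that] .
  show "d n x \<in> FM p (n + 1)" "d n x \<in> FM (p + 1) (n + 1)" if "x \<in> FM p n" for p n x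
    using that d_F d_M d_M_raises_filtration unfolding FM_def by auto
  show "\<exists>B'. (\<forall>p q. subspace (B' p q) \<and> B' p q \<subseteq> M (p + q)) \<and>
      (\<forall>n. independent_family (\<lambda>q. B' q (n - q))) \<and>
      (\<forall>p n. FM p n = span (\<Union>q\<in>{p..}. B' q (n - q)))"
    by (rule exI[of _ "\<lambda>p q. Mq p (p + q)"]) (simp add: Mq_subspace Mq_M Mq_independent FM_span)
qed

lemma filtered_ainf_morphism_f_tr:
  "filtered_ainf_morphism sc M FM d transfer.nu_tr A F d (dg_nu mu) transfer.f_tr"
  unfolding filtered_ainf_morphism_def FM_eq
  using transfer.f_tr_multilinear transfer.f_tr_filtered transfer.f_tr_morphism_relation by blast

lemma filtered_quasi_iso_inclusion: "filtered_quasi_iso FM d F d (\<lambda>n x. transfer.f_tr 1 [n] [x])"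
  unfolding filtered_quasi_iso_def transfer.f_tr_1[OF order_refl] list.sel
proof (intro conjI allI ballI impI)
  fix p n y assume "y \<in> F p n" "d n y = 0"
  then show "\<exists>x\<in>FM p n. d n x = 0 \<and> y - x \<in> d (n - 1) ` F p (n - 1)"
    using cycle_homologous_M unfolding FM_def by blast
next
  fix p n x assume x: "x \<in> FM p n" "d n x = 0" "x \<in> d (n - 1) ` F p (n - 1)"
  then obtain a where "a \<in> F p (n - 1)" "x = d (n - 1) a" by blast
  then show "x \<in> d (n - 1) ` FM p (n - 1)"
    using boundary_in_M x(1) unfolding FM_def by blast
qed

lemma filtered_minimal_model_M:
    "filtered_minimal_model sc A F d mu M FM d transfer.nu_tr transfer.f_tr"
  unfolding filtered_minimal_model_def
  using filtered_minimal_M filtered_ainf_morphism_f_tr filtered_quasi_iso_inclusion by blast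

end

theorem theorem3p12:
  fixes sc :: "'k::field \<Rightarrow> 'a::ab_group_add \<Rightarrow> 'a"
    and A :: "int \<Rightarrow> 'a set" and F :: "int \<Rightarrow> int \<Rightarrow> 'a set"
    and d :: "int \<Rightarrow> 'a \<Rightarrow> 'a" and mu :: "int \<Rightarrow> int \<Rightarrow> 'a \<Rightarrow> 'a \<Rightarrow> 'a"
  assumes "filtered_dg_algebra sc A F d mu"
  shows "\<exists>(M :: int \<Rightarrow> 'a set) (FM :: int \<Rightarrow> int \<Rightarrow> 'a set) (dM :: int \<Rightarrow> 'a \<Rightarrow> 'a)
           (nuM :: nat \<Rightarrow> int list \<Rightarrow> 'a list \<Rightarrow> 'a) (f :: nat \<Rightarrow> int list \<Rightarrow> 'a list \<Rightarrow> 'a).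
           filtered_minimal_model sc A F d mu M FM dM nuM f"
proof -
  have "vector_space sc"
    using assms unfolding filtered_dg_algebra_def dg_algebra_def graded_space_def by simp
  then interpret filtered_dga sc A F d mu
    by (rule filtered_dga.intro) (rule filtered_dga_axioms.intro[OF assms])
  show ?thesis using filtered_minimal_model_M by blast
qed

end
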